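(* Let $\mu$ be the self-similar measure of a WIFS satisfying the $\Phi$-FNC for an iteration rule $\Phi$. Then for every $q\in\mathbb R$, $$\tau_\mu(q)=\liminf_{t\to0}\frac{\log\sum_{\eta\in\mathcal F(t)}\rho(\eta)^q}{\log t}.$$
   Context: Setting. A weighted iterated function system (WIFS) $(S_i,p_i)_{i\in\mathcal I}$ consists of a finite index set $\mathcal I$, maps $S_i(x)=r_ix+d_i$ on $\mathbb R$ with $0<|r_i|<1$, and probabilities $p_i>0$ with $\sum_i p_i=1$. Its self-similar set $K$ is the unique nonempty compact set with $K=\bigcup_i S_i(K)$ and its self-similar measure $\mu$ is the unique Borel probability measure with $\mu(E)=\sum_i p_i\,\mu(S_i^{-1}(E))$. Standing assumptions: $K$ is not a singleton and its convex hull is $[0,1]$. For a finite word $\sigma=\sigma_1\cdots\sigma_n$ over $\mathcal I$ (the set of all finite words, including the empty word, is $\mathcal I^*$) put $S_\sigma=S_{\sigma_1}\circ\cdots\circ S_{\sigma_n}$. Iteration rules and net intervals. Fix a total order on the affine bijections $x\mapsto ax+b$ ($a\ne0$) of $\mathbb R$. For a closed interval $J$ let $T_J(x)=rx+c$ ($r>0$) be the map with $T_J([0,1])=J$. An iteration rule $\Phi$ assigns to each finite strictly increasing tuple $v=(f_1,\dots,f_m)$ of such maps a tuple $\Phi(v)=(\mathcal C_1,\dots,\mathcal C_m)$ of finite subsets of $\mathcal I^*$ such that for each $i$ and all large $n$ every word of length $n$ has a unique prefix in $\mathcal C_i$. Children of a pair $(\Delta,v)$, $\Delta=[a,b]$: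 let $\mathcal Y=\{T_\Delta\circ f_i\circ S_\tau:1\le i\le m,\tau\in\mathcal C_i\}$ and list $\{a,b\}\cup\{g(z):g\in\mathcal Y,z\in\{0,1\},g(z)\in\Delta\}$ as $a=y_1<\dots<y_{k+1}=b$; the children are the pairs $(\Delta',v')$ with $\Delta'=[y_j,y_{j+1}]$, $(y_j,y_{j+1})\cap K\ne\emptyset$, and $v'$ the increasing tuple of the distinct maps $T_{\Delta'}^{-1}\circ g$, $g\in\mathcal Y$, $g(K)\cap(y_j,y_{j+1})\ne\emptyset$. Let $\mathcal N_0=\{([0,1],(\mathrm{id}))\}$ and $\mathcal N_{n+1}$ the set of children of members of $\mathcal N_n$; for $(\Delta,v)\in\mathcal N_n$, $\Delta$ is a net interval of level $n$ with neighbour set $v$. $\Phi$ must also satisfy: (i) $\max\{r\,\mathrm{diam}\Delta:(\Delta,v)\in\mathcal N_n,(x\mapsto rx+c)\in v\}\to0$; (ii) if $f_1\neq f_2$ lie in a neighbour set then $f_1\circ S_\sigma\ne f_2$ for all $\sigma\in\mathcal I^*$. (Convention: a pair whose only child has the same interval is replaced by that child.) Transition graph. Children, their neighbour sets, relative positions and diameter ratios depend only on $v$. The transition graph $\mathcal G$ has as vertices the neighbour sets occurring, root $v_{\mathrm{root}}=(\mathrm{id})$, and one edge $e$ from $v$ to $v'$ for each child $(\Delta',v')$ of a pair $(\Delta,v)$ (distinguished by the relative position of $\Delta'$ in $\Delta$), with weight $W(e)=\mathrm{diam}\Delta'/\mathrm{diam}\Delta$; for a path $\eta=(e_1,\dots,e_n)$,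 $W(\eta)=\prod W(e_k)$. $\Omega^n,\Omega^*$ are the rooted paths (starting at $v_{\mathrm{root}}$) of length $n$, resp. finite. Each $\eta\in\Omega^n$ corresponds bijectively to a net interval $\pi(\eta)$ of level $n$ (following children), with $W(\eta)=\mathrm{diam}\,\pi(\eta)$; $\rho(\eta):=\mu(\pi(\eta))$. The WIFS satisfies the $\Phi$-FNC if $\mathcal G$ is finite. $\mathcal F(t)$ is the set of $(e_1,\dots,e_n)\in\Omega^*$ with $W(e_1\cdots e_n)\le t<W(e_1\cdots e_{n-1})$. $L^q$-spectrum: $\tau_\mu(q)=\liminf_{t\to0}\log\sup\sum_i\mu(B(x_i,t))^q/\log t$, the supremum over finite families of pairwise disjoint balls $B(x_i,t)$ with $x_i\in K$. *)

theory Defs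
  imports "HOL-Analysis.Analysis" "HOL-Probability.Probability"
begin

type_synonym aff = "real \<times> real"

definition app :: "aff \<Rightarrow> real \<Rightarrow> real" where
  "app f x = fst f * x + snd f"

definition acomp :: "aff \<Rightarrow> aff \<Rightarrow> aff" where
  "acomp f g = (fst f * fst g, fst f * snd g + snd f)"

definition ainv :: "aff \<Rightarrow> aff" where
  "ainv f = (1 / fst f, - snd f / fst f)"

definition aid :: aff where "aid = (1, 0)"

text \<open>Closed intervals [a,b] (a<b) are represented as pairs (a,b).
  T_J is the orientation preserving affine map sending [0,1] onto J.\<close>

definition Tint :: "real \<times> real \<Rightarrow> aff" where
  "Tint J = (snd J - fst J, fst J)"

definition Sw :: "('i \<Rightarrow> real) \<Rightarrow> ('i \<Rightarrow> real) \<Rightarrow> 'i list \<Rightarrow> aff" where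
  "Sw r d \<sigma> = foldr (\<lambda>i f. acomp (r i, d i) f) \<sigma> aid"

text \<open>An iteration rule assigns to a neighbour set v (a finite set of affine maps; the
  tuple (f_1,...,f_m) in increasing order) and to each of its members f_i the set C_i of words.\<close>

type_synonym 'i itrule = "aff set \<Rightarrow> aff \<Rightarrow> 'i list set"

type_synonym npair = "(real \<times> real) \<times> aff set"

definition raw_children ::
  "('i \<Rightarrow> real) \<Rightarrow> ('i \<Rightarrow> real) \<Rightarrow> real set \<Rightarrow> 'i itrule \<Rightarrow> npair \<Rightarrow> npair set" where
  "raw_children r d K \<Phi> x =
    (let \<Delta> = fst x; v = snd x;
         Y = {acomp (Tint \<Delta>) (acomp f (Sw r d \<tau>)) | f \<tau>. f \<in> v \<and> \<tau> \<in> \<Phi> v f};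
         P = {fst \<Delta>, snd \<Delta>} \<union>
             {app g z | g z. g \<in> Y \<and> z \<in> {0, 1} \<and> app g z \<in> {fst \<Delta>..snd \<Delta>}}
     in {((y, y'), {acomp (ainv (Tint (y, y'))) g | g. g \<in> Y \<and> app g ` K \<inter> {y<..<y'} \<noteq> {}})
         | y y'. y \<in> P \<and> y' \<in> P \<and> y < y' \<and> (\<forall>z\<in>P. \<not> (y < z \<and> z < y')) \<and>
                 {y<..<y'} \<inter> K \<noteq> {}})"

text \<open>Convention: a pair whose only child has the same interval is replaced by that child
  (iterated).\<close>

definition same_step ::
  "('i \<Rightarrow> real) \<Rightarrow> ('i \<Rightarrow> real) \<Rightarrow> real set \<Rightarrow> 'i itrule \<Rightarrow> npair \<Rightarrow> npair \<Rightarrow> bool" where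
  "same_step r d K \<Phi> x y \<longleftrightarrow> raw_children r d K \<Phi> x = {y} \<and> fst y = fst x"

definition stops :: "('i \<Rightarrow> real) \<Rightarrow> ('i \<Rightarrow> real) \<Rightarrow> real set \<Rightarrow> 'i itrule \<Rightarrow> npair \<Rightarrow> bool" where
  "stops r d K \<Phi> x \<longleftrightarrow> \<not> (\<exists>y. same_step r d K \<Phi> x y)"

definition children ::
  "('i \<Rightarrow> real) \<Rightarrow> ('i \<Rightarrow> real) \<Rightarrow> real set \<Rightarrow> 'i itrule \<Rightarrow> npair \<Rightarrow> npair set" where
  "children r d K \<Phi> x =
     \<Union> {raw_children r d K \<Phi> z | z. (same_step r d K \<Phi>)\<^sup>*\<^sup>* x z \<and> stops r d K \<Phi> z}"

definition root_pair :: npair where "root_pair = ((0, 1), {aid})"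

fun netN :: "('i \<Rightarrow> real) \<Rightarrow> ('i \<Rightarrow> real) \<Rightarrow> real set \<Rightarrow> 'i itrule \<Rightarrow> nat \<Rightarrow> npair set" where
  "netN r d K \<Phi> 0 = {root_pair}"
| "netN r d K \<Phi> (Suc n) = \<Union> (children r d K \<Phi> ` netN r d K \<Phi> n)"

definition is_iteration_rule ::
  "'i set \<Rightarrow> ('i \<Rightarrow> real) \<Rightarrow> ('i \<Rightarrow> real) \<Rightarrow> real set \<Rightarrow> 'i itrule \<Rightarrow> bool" where
  "is_iteration_rule I r d K \<Phi> \<longleftrightarrow>
     \<comment> \<open>each C_i is a finite set of words, and for large n every word of length n has a unique prefix in C_i\<close>
     (\<forall>v. finite v \<and> (\<forall>f\<in>v. fst f \<noteq> 0) \<longrightarrow> (\<forall>f\<in>v.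
        finite (\<Phi> v f) \<and> \<Phi> v f \<subseteq> lists I \<and>
        (\<exists>N. \<forall>n\<ge>N. \<forall>w\<in>lists I. length w = n \<longrightarrow> (\<exists>!\<sigma>. \<sigma> \<in> \<Phi> v f \<and> prefix \<sigma> w)))) \<and>
     \<comment> \<open>the convention (replacement of single same-interval children) is well defined\<close>
     (\<forall>n. \<forall>x\<in>netN r d K \<Phi> n. \<exists>z. (same_step r d K \<Phi>)\<^sup>*\<^sup>* x z \<and> stops r d K \<Phi> z) \<and>
     \<comment> \<open>(i): max { |r| diam \<Delta> } over level-n net intervals tends to 0\<close>
     (\<forall>\<epsilon>>0. \<exists>N. \<forall>n\<ge>N. \<forall>x\<in>netN r d K \<Phi> n. \<forall>f\<in>snd x.
        \<bar>fst f\<bar> * (snd (fst x) - fst (fst x)) \<le> \<epsilon>) \<and>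
     \<comment> \<open>(ii)\<close>
     (\<forall>n. \<forall>x\<in>netN r d K \<Phi> n. \<forall>f1\<in>snd x. \<forall>f2\<in>snd x. f1 \<noteq> f2 \<longrightarrow>
        (\<forall>\<sigma>\<in>lists I. acomp f1 (Sw r d \<sigma>) \<noteq> f2))"

type_synonym edge = "aff set \<times> (real \<times> real) \<times> aff set"

definition relpos :: "real \<times> real \<Rightarrow> real \<times> real \<Rightarrow> real \<times> real" where
  "relpos \<Delta> \<Delta>' = ((fst \<Delta>' - fst \<Delta>) / (snd \<Delta> - fst \<Delta>), (snd \<Delta>' - fst \<Delta>) / (snd \<Delta> - fst \<Delta>))"

definition tg_vertices ::
  "('i \<Rightarrow> real) \<Rightarrow> ('i \<Rightarrow> real) \<Rightarrow> real set \<Rightarrow> 'i itrule \<Rightarrow> aff set set" where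
  "tg_vertices r d K \<Phi> = {v. \<exists>n \<Delta>. (\<Delta>, v) \<in> netN r d K \<Phi> n}"

definition tg_edges ::
  "('i \<Rightarrow> real) \<Rightarrow> ('i \<Rightarrow> real) \<Rightarrow> real set \<Rightarrow> 'i itrule \<Rightarrow> edge set" where
  "tg_edges r d K \<Phi> = {(v, relpos \<Delta> \<Delta>', v') | v v' \<Delta> \<Delta>'. \<exists>n. (\<Delta>, v) \<in> netN r d K \<Phi> n \<and>
                                   (\<Delta>', v') \<in> children r d K \<Phi> (\<Delta>, v)}"

definition FNC :: "('i \<Rightarrow> real) \<Rightarrow> ('i \<Rightarrow> real) \<Rightarrow> real set \<Rightarrow> 'i itrule \<Rightarrow> bool" where
  "FNC r d K \<Phi> \<longleftrightarrow> finite (tg_vertices r d K \<Phi>) \<and> finite (tg_edges r d K \<Phi>)"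

definition edge_weight :: "edge \<Rightarrow> real" where
  "edge_weight e = snd (fst (snd e)) - fst (fst (snd e))"

definition path_weight :: "edge list \<Rightarrow> real" where
  "path_weight es = prod_list (map edge_weight es)"

definition rooted_path :: "('i \<Rightarrow> real) \<Rightarrow> ('i \<Rightarrow> real) \<Rightarrow> real set \<Rightarrow> 'i itrule \<Rightarrow> edge list \<Rightarrow> bool" where
  "rooted_path r d K \<Phi> es \<longleftrightarrow>
     set es \<subseteq> tg_edges r d K \<Phi> \<and>
     (es \<noteq> [] \<longrightarrow> fst (hd es) = {aid}) \<and>
     (\<forall>k. Suc k < length es \<longrightarrow> snd (snd (es ! k)) = fst (es ! Suc k))"

text \<open>The net interval pi(eta) reached by following the children along a path.\<close>

definition path_interval :: "edge list \<Rightarrow> real \<times> real" where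
  "path_interval es = foldl (\<lambda>\<Delta> e. (fst \<Delta> + (snd \<Delta> - fst \<Delta>) * fst (fst (snd e)),
                                     fst \<Delta> + (snd \<Delta> - fst \<Delta>) * snd (fst (snd e)))) (0, 1) es"

definition Fset :: "('i \<Rightarrow> real) \<Rightarrow> ('i \<Rightarrow> real) \<Rightarrow> real set \<Rightarrow> 'i itrule \<Rightarrow> real \<Rightarrow> edge list set" where
  "Fset r d K \<Phi> t = {es. rooted_path r d K \<Phi> es \<and> es \<noteq> [] \<and>
                          path_weight es \<le> t \<and> t < path_weight (butlast es)}"

definition Lq_spectrum :: "real measure \<Rightarrow> real set \<Rightarrow> real \<Rightarrow> ereal" where
  "Lq_spectrum \<mu> K q = Liminf (at_right 0) (\<lambda>t. ereal (
     ln (Sup {\<Sum>x\<in>X. measure \<mu> (cball x t) powr q | X.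
               finite X \<and> X \<subseteq> K \<and> pairwise (\<lambda>x y. cball x t \<inter> cball y t = {}) X}) / ln t))"

end

theory Submission
  imports Defs
begin

text \<open>
  Net intervals of level \<open>n\<close> are the intervals \<open>\<pi>(\<eta>)\<close> of the rooted paths of length \<open>n\<close>. The
  intervals \<open>\<pi>(\<eta>)\<close>, \<open>\<eta> \<in> F(t)\<close>, have disjoint interiors and lengths between \<open>w\<^sub>m\<^sub>i\<^sub>n t\<close> and
  \<open>t\<close>, where \<open>w\<^sub>m\<^sub>i\<^sub>n\<close> is the least weight of the finitely many edges, and they cover \<open>K\<close>: a point
  of \<open>K\<close> outside the interiors of the level-\<open>n\<close> net intervals is one of finitely many cut points,
  and \<open>K\<close> has no isolated points. As there are finitely many neighbour sets, each \<open>\<pi>(\<eta>)\<close> contains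
  a point of \<open>K\<close> at relative distance at least a fixed \<open>m > 0\<close> from its ends. Consequently a
  \<open>t\<close>-ball centred in \<open>K\<close> meets boundedly many \<open>\<pi>(\<eta>)\<close> and conversely, and suitable balls around
  the inner points form packings. The sum \<open>\<Sum> \<rho>(\<eta>)\<^sup>q\<close> and the packing sums of \<open>\<mu>(B(x, t))\<^sup>q\<close> thus
  agree up to constant factors and a constant rescaling of \<open>t\<close>, which do not affect the lower
  limit of \<open>log(\<dots>) / log t\<close>.
\<close>

lemma app_pair: "app (a, b) x = a * x + b"
  by (simp add: app_def)

lemma app_acomp [simp]: "app (acomp f g) x = app f (app g x)"
  by (simp add: app_def acomp_def algebra_simps)

lemma acomp_assoc: "acomp (acomp f g) h = acomp f (acomp g h)"
  by (simp add: acomp_def algebra_simps)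

lemma acomp_aid [simp]: "acomp aid f = f" "acomp f aid = f"
  by (auto simp: acomp_def aid_def)

lemma app_aid [simp]: "app aid x = x"
  by (simp add: app_def aid_def)

lemma fst_acomp [simp]: "fst (acomp f g) = fst f * fst g"
  by (simp add: acomp_def)

lemma acomp_ainv: "fst f \<noteq> 0 \<Longrightarrow> acomp f (acomp (ainv f) g) = g"
  by (cases f; cases g) (simp add: acomp_def ainv_def field_simps)

lemma app_ainv: "fst f \<noteq> 0 \<Longrightarrow> app f (app (ainv f) x) = x"
  by (cases f) (simp add: app_def ainv_def field_simps)

lemma ainv_acomp_acomp:
  "fst f \<noteq> 0 \<Longrightarrow> fst g \<noteq> 0 \<Longrightarrow> acomp (ainv (acomp f g)) (acomp f h) = acomp (ainv g) h"
  by (cases f; cases g; cases h) (simp add: acomp_def ainv_def field_simps)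

lemma app_diff: "app f x - app f y = fst f * (x - y)"
  by (simp add: app_def algebra_simps)

lemma compact_app_image: "compact A \<Longrightarrow> compact (app f ` A)"
  by (rule compact_continuous_image) (auto simp: app_def intro!: continuous_intros)

lemma Sw_Nil [simp]: "Sw r d [] = aid"
  by (simp add: Sw_def)

lemma Sw_Cons [simp]: "Sw r d (i # s) = acomp (r i, d i) (Sw r d s)"
  by (simp add: Sw_def)

lemma Sw_append: "Sw r d (s @ t) = acomp (Sw r d s) (Sw r d t)"
  by (induction s) (auto simp: acomp_assoc)

lemma app_Tint: "app (Tint J) x = fst J + (snd J - fst J) * x"
  by (simp add: app_def Tint_def algebra_simps)

lemma fst_Tint [simp]: "fst (Tint J) = snd J - fst J"
  by (simp add: Tint_def)

lemma app_Tint_0 [simp]: "app (Tint J) 0 = fst J"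
  and app_Tint_1 [simp]: "app (Tint J) 1 = snd J"
  by (simp_all add: app_Tint)

lemma app_Tint_less_iff: "fst J < snd J \<Longrightarrow> app (Tint J) x < app (Tint J) y \<longleftrightarrow> x < y"
  and app_Tint_le_iff: "fst J < snd J \<Longrightarrow> app (Tint J) x \<le> app (Tint J) y \<longleftrightarrow> x \<le> y"
  and app_Tint_eq_iff: "fst J < snd J \<Longrightarrow> app (Tint J) x = app (Tint J) y \<longleftrightarrow> x = y"
  by (simp_all add: app_Tint)

lemma app_Tint_surj: "fst J < snd J \<Longrightarrow> \<exists>z. y = app (Tint J) z"
  by (rule exI[of _ "app (ainv (Tint J)) y"]) (simp add: app_ainv)

lemma inj_app_Tint: "fst J < snd J \<Longrightarrow> inj (app (Tint J))"
  by (auto intro: injI simp: app_Tint_eq_iff)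

lemma greaterThanLessThan_app_Tint:
  assumes "fst J < snd J"
  shows "{app (Tint J) u<..<app (Tint J) u'} = app (Tint J) ` {u<..<u'}"
proof (intro equalityI subsetI)
  fix y assume "y \<in> {app (Tint J) u<..<app (Tint J) u'}"
  moreover obtain z where "y = app (Tint J) z" using app_Tint_surj[OF assms] by blast
  ultimately show "y \<in> app (Tint J) ` {u<..<u'}" using app_Tint_less_iff[OF assms] by auto
qed (use app_Tint_less_iff[OF assms] in auto)

lemma Tint_app_Tint: "Tint (app (Tint J) u, app (Tint J) u') = acomp (Tint J) (Tint (u, u'))"
  by (simp add: Tint_def acomp_def app_def algebra_simps)

lemma ainv_Tint_app_Tint:
  assumes "fst J < snd J" "u < u'"
  shows "acomp (ainv (Tint (app (Tint J) u, app (Tint J) u'))) (acomp (Tint J) g)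
       = acomp (ainv (Tint (u, u'))) g"
  unfolding Tint_app_Tint using assms by (intro ainv_acomp_acomp) auto

lemma card_mult_le_of_disjoint_family:
  fixes A :: "'a \<Rightarrow> real set"
  assumes "finite S" and "\<And>i. i \<in> S \<Longrightarrow> A i \<in> sets borel"
    and "disjoint_family_on A S" and "\<And>i. i \<in> S \<Longrightarrow> A i \<subseteq> {c..c + L}"
    and "\<And>i. i \<in> S \<Longrightarrow> l \<le> measure lborel (A i)" and "0 \<le> L"
  shows "real (card S) * l \<le> L"
proof -
  have finite_A: "emeasure lborel (A i) \<noteq> \<infinity>" if "i \<in> S" for i
  proof -
    have "emeasure lborel (A i) \<le> emeasure lborel {c..c + L}"
      using assms(4)[OF that] by (intro emeasure_mono) auto
    also have "\<dots> < \<infinity>" by (simp add: emeasure_lborel_Icc_eq)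
    finally show ?thesis by simp
  qed
  have "real (card S) * l = (\<Sum>i\<in>S. l)" by simp
  also have "\<dots> \<le> (\<Sum>i\<in>S. measure lborel (A i))" using assms(5) by (intro sum_mono) auto
  also have "\<dots> = measure lborel (\<Union>i\<in>S. A i)"
    using assms(1-3) finite_A by (intro measure_finite_Union[symmetric]) auto
  also have "\<dots> \<le> measure lborel {c..c + L}"
    using assms(1,2,4) by (intro measure_mono_fmeasurable) (auto simp: fmeasurable_def emeasure_lborel_Icc_eq)
  also have "\<dots> = L" using assms(6) by simp
  finally show ?thesis .
qed

lemma finite_ex_max_value:
  fixes f :: "'a \<Rightarrow> 'b::linorder"
  assumes "finite A" "A \<noteq> {}"
  shows "\<exists>x\<in>A. \<forall>y\<in>A. f y \<le> f x"
proof -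
  have "Max (f ` A) \<in> f ` A" using assms by (intro Max_in) auto
  then obtain x where x: "x \<in> A" "Max (f ` A) = f x" unfolding image_iff by (rule bexE)
  have "f y \<le> f x" if "y \<in> A" for y
    unfolding x(2)[symmetric] using assms(1) that by (intro Max_ge) auto
  with x(1) show ?thesis by blast
qed

lemma dist_gt_of_cball_disjoint:
  fixes x y t :: real
  assumes "cball x t \<inter> cball y t = {}"
  shows "2 * t < \<bar>x - y\<bar>"
proof (rule ccontr)
  assume "\<not> 2 * t < \<bar>x - y\<bar>"
  then have "(x + y) / 2 \<in> cball x t \<inter> cball y t"
    by (auto simp: dist_real_def abs_if field_simps split: if_splits)
  then show False using assms by blast
qed

lemma abs_diff_ge_2_if_even:
  fixes j j' :: int
  assumes "even (j - j')" "j \<noteq> j'"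
  shows "2 \<le> \<bar>j - j'\<bar>"
proof -
  obtain k where "j - j' = 2 * k" using assms(1) by blast
  then show ?thesis using assms(2) by (cases "k = 0") (auto simp: abs_mult)
qed

lemma tendsto_const_divide_ln_at_right_0: "((\<lambda>t. C / ln t) \<longlongrightarrow> 0) (at_right (0::real))"
  by (rule tendsto_divide_0[OF tendsto_const filterlim_mono[OF ln_at_0 at_bot_le_at_infinity order.refl]])

text \<open>Used with \<open>h t = ln (c t) / ln t\<close> and \<open>e t = ln C / ln t\<close>: then a bound \<open>S (c t) \<le> C T t\<close>
  gives \<open>liminf ln S / ln \<le> liminf ln T / ln\<close>.\<close>

lemma Liminf_at_right_0_le_rescaled:
  fixes A B h e :: "real \<Rightarrow> real" and c :: real
  assumes c: "0 < c" and bound: "eventually (\<lambda>t. B (c * t) * h t + e t \<le> A t) (at_right 0)"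
    and h: "(h \<longlongrightarrow> 1) (at_right 0)" and e: "(e \<longlongrightarrow> 0) (at_right 0)"
  shows "Liminf (at_right 0) (\<lambda>t. ereal (B t)) \<le> Liminf (at_right 0) (\<lambda>t. ereal (A t))"
proof (unfold le_Liminf_iff, intro allI impI)
  fix y assume y: "y < Liminf (at_right 0) (\<lambda>t. ereal (B t))"
  obtain z where z: "y < ereal z" "ereal z < Liminf (at_right 0) (\<lambda>t. ereal (B t))"
    using ereal_dense2[OF y] by blast
  have "eventually (\<lambda>s. ereal z < ereal (B s)) (at_right 0)"
    using z(2) le_Liminf_iff[THEN iffD1, OF order.refl] by blast
  then obtain b where b: "b > 0" "\<And>s. 0 < s \<Longrightarrow> s < b \<Longrightarrow> z < B s"
    unfolding eventually_at_right_field by auto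
  have "eventually (\<lambda>t. z < B (c * t)) (at_right 0)"
    unfolding eventually_at_right_field
    by (rule exI[of _ "b / c"]) (use b c in \<open>auto simp: field_simps\<close>)
  moreover have "eventually (\<lambda>t. 0 < h t) (at_right 0)"
    using order_tendstoD(1)[OF h] by simp
  ultimately have lower: "eventually (\<lambda>t. z * h t + e t \<le> A t) (at_right 0)"
    using bound
  proof eventually_elim
    case (elim t)
    then have "z * h t \<le> B (c * t) * h t" by (intro mult_right_mono) auto
    then show ?case using elim(3) by linarith
  qed
  have lim: "((\<lambda>t. z * h t + e t) \<longlongrightarrow> z * 1 + 0) (at_right 0)"
    by (intro tendsto_intros h e)
  show "eventually (\<lambda>t. y < ereal (A t)) (at_right 0)"
  proof (cases y)
    case (real y0)
    then have "eventually (\<lambda>t. y0 < z * h t + e t) (at_right 0)"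
      using order_tendstoD(1)[OF lim] z(1) by simp
    then show ?thesis using lower by eventually_elim (auto simp: real)
  qed (use z(1) in auto)
qed

subsection \<open>The self-similar set\<close>

locale self_similar_set =
  fixes I :: "'i set" and r d :: "'i \<Rightarrow> real" and K :: "real set"
  assumes finite_I: "finite I"
    and r_bounds: "\<forall>i\<in>I. 0 < \<bar>r i\<bar> \<and> \<bar>r i\<bar> < 1"
    and compact_K: "compact K" and K_nonempty: "K \<noteq> {}"
    and K_self_similar: "K = (\<Union>i\<in>I. (\<lambda>x. r i * x + d i) ` K)"
    and hull_K: "convex hull K = {0..1}"
begin

abbreviation S :: "'i list \<Rightarrow> aff" where "S \<equiv> Sw r d"

lemma K_eq_Union_maps: "K = (\<Union>i\<in>I. app (r i, d i) ` K)"
proof -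
  have "app (r i, d i) = (\<lambda>x. r i * x + d i)" for i by (auto simp: app_pair)
  then show ?thesis by (simp only:) (rule K_self_similar)
qed

lemma map_image_K_subset: "i \<in> I \<Longrightarrow> app (r i, d i) ` K \<subseteq> K"
  by (subst (2) K_eq_Union_maps) blast

lemma K_subset_01: "K \<subseteq> {0..1}"
  using hull_subset[of K convex] hull_K by simp

lemma zero_in_K: "0 \<in> K"
proof (rule ccontr)
  assume "0 \<notin> K"
  obtain m where m: "m \<in> K" "\<forall>y\<in>K. m \<le> y"
    using compact_attains_inf[OF compact_K K_nonempty] by blast
  moreover have "m \<noteq> 0" using m \<open>0 \<notin> K\<close> by auto
  ultimately have "m > 0" using K_subset_01 by force
  have "convex hull K \<subseteq> {m..}"
    by (rule hull_minimal) (use m in auto)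
  then show False using hull_K \<open>m > 0\<close> by auto
qed

lemma one_in_K: "1 \<in> K"
proof (rule ccontr)
  assume "1 \<notin> K"
  obtain m where m: "m \<in> K" "\<forall>y\<in>K. y \<le> m"
    using compact_attains_sup[OF compact_K K_nonempty] by blast
  moreover have "m \<noteq> 1" using m \<open>1 \<notin> K\<close> by auto
  ultimately have "m < 1" using K_subset_01 by force
  have "convex hull K \<subseteq> {..m}"
    by (rule hull_minimal) (use m in auto)
  then show False using hull_K \<open>m < 1\<close> by auto
qed

lemma r_nonzero: "i \<in> I \<Longrightarrow> r i \<noteq> 0"
  using r_bounds by force

lemma Sw_image_K_subset: "\<sigma> \<in> lists I \<Longrightarrow> app (S \<sigma>) ` K \<subseteq> K"
proof (induction \<sigma>)
  case (Cons i s)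
  have "app (S (i # s)) ` K = app (r i, d i) ` (app (S s) ` K)" by (auto simp: image_image)
  also have "\<dots> \<subseteq> app (r i, d i) ` K" using Cons by auto
  also have "\<dots> \<subseteq> K" using map_image_K_subset Cons.prems by auto
  finally show ?case .
qed simp

lemma fst_Sw_nonzero: "\<sigma> \<in> lists I \<Longrightarrow> fst (S \<sigma>) \<noteq> 0"
  by (induction \<sigma>) (auto simp: aid_def r_nonzero)

lemma K_eq_Union_words: "K = (\<Union>\<sigma>\<in>{\<sigma>\<in>lists I. length \<sigma> = n}. app (S \<sigma>) ` K)"
proof (induction n)
  case 0
  show ?case by auto
next
  case (Suc n)
  show ?case
  proof
    show "(\<Union>\<sigma>\<in>{\<sigma>\<in>lists I. length \<sigma> = Suc n}. app (S \<sigma>) ` K) \<subseteq> K"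
      using Sw_image_K_subset by blast
    show "K \<subseteq> (\<Union>\<sigma>\<in>{\<sigma>\<in>lists I. length \<sigma> = Suc n}. app (S \<sigma>) ` K)"
    proof
      fix x assume "x \<in> K"
      then obtain i y where i: "i \<in> I" "y \<in> K" "x = app (r i, d i) y"
        by (subst (asm) K_eq_Union_maps) blast
      then obtain \<sigma> where \<sigma>: "\<sigma> \<in> lists I" "length \<sigma> = n" "y \<in> app (S \<sigma>) ` K"
        using Suc.IH by blast
      then have "x \<in> app (S (i # \<sigma>)) ` K" using i by auto
      then show "x \<in> (\<Union>\<sigma>\<in>{\<sigma>\<in>lists I. length \<sigma> = Suc n}. app (S \<sigma>) ` K)"
        using \<sigma> i by (intro UN_I[of "i # \<sigma>"]) auto
    qed
  qed
qed

definition rmax :: real where "rmax = Max (insert 0 ((\<lambda>i. \<bar>r i\<bar>) ` I))"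

lemma abs_r_le_rmax: "i \<in> I \<Longrightarrow> \<bar>r i\<bar> \<le> rmax"
  and rmax_nonneg: "0 \<le> rmax"
  and rmax_less_1: "rmax < 1"
  unfolding rmax_def using finite_I r_bounds by (auto intro: Max_ge simp: Max_less_iff)

lemma rmax_power_less: "e > 0 \<Longrightarrow> \<exists>n. rmax ^ n < e"
  using real_arch_pow_inv rmax_less_1 by blast

lemma abs_fst_Sw_le: "\<sigma> \<in> lists I \<Longrightarrow> \<bar>fst (S \<sigma>)\<bar> \<le> rmax ^ length \<sigma>"
proof (induction \<sigma>)
  case (Cons i s)
  then have "\<bar>r i\<bar> * \<bar>fst (S s)\<bar> \<le> rmax * rmax ^ length s"
    using abs_r_le_rmax rmax_nonneg by (intro mult_mono) auto
  then show ?case by (simp add: abs_mult)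
qed (simp add: aid_def)

lemma dist_app_Sw_le:
  assumes "\<sigma> \<in> lists I" "k \<in> K" "z \<in> {0..1}"
  shows "\<bar>app (S \<sigma>) z - app (S \<sigma>) k\<bar> \<le> rmax ^ length \<sigma>"
proof -
  have "\<bar>z - k\<bar> \<le> 1" using assms K_subset_01 by (auto simp: abs_le_iff)
  then have "\<bar>fst (S \<sigma>)\<bar> * \<bar>z - k\<bar> \<le> rmax ^ length \<sigma> * 1"
    using abs_fst_Sw_le[OF assms(1)] by (intro mult_mono) auto
  then show ?thesis by (simp add: app_diff abs_mult)
qed

text \<open>The two endpoints of a small copy \<open>S\<^sub>\<sigma>(K)\<close> containing \<open>x\<close> are distinct points of \<open>K\<close> near \<open>x\<close>.\<close>

lemma K_islimpt: "x \<in> K \<Longrightarrow> x islimpt K"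
proof (unfold islimpt_approachable, intro allI impI)
  fix e :: real assume "x \<in> K" "e > 0"
  obtain n where n: "rmax ^ n < e" using rmax_power_less \<open>e > 0\<close> by blast
  obtain \<sigma> k where \<sigma>: "\<sigma> \<in> lists I" "length \<sigma> = n" "k \<in> K" "x = app (S \<sigma>) k"
    using K_eq_Union_words[of n] \<open>x \<in> K\<close> by blast
  have ends_in_K: "app (S \<sigma>) 0 \<in> K" "app (S \<sigma>) 1 \<in> K"
    using Sw_image_K_subset[OF \<sigma>(1)] zero_in_K one_in_K by auto
  have ends_distinct: "app (S \<sigma>) 0 \<noteq> app (S \<sigma>) 1"
    using fst_Sw_nonzero[OF \<sigma>(1)] by (simp add: app_def)
  have ends_near: "\<bar>app (S \<sigma>) 0 - x\<bar> < e" "\<bar>app (S \<sigma>) 1 - x\<bar> < e"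
    using dist_app_Sw_le[OF \<sigma>(1,3), of 0] dist_app_Sw_le[OF \<sigma>(1,3), of 1] n \<sigma>(2,4) by auto
  show "\<exists>y\<in>K. y \<noteq> x \<and> dist y x < e"
  proof (cases "app (S \<sigma>) 0 = x")
    case True
    then show ?thesis
      using ends_distinct ends_near ends_in_K by (intro bexI[of _ "app (S \<sigma>) 1"]) (auto simp: dist_real_def)
  next
    case False
    then show ?thesis
      using ends_distinct ends_near ends_in_K by (intro bexI[of _ "app (S \<sigma>) 0"]) (auto simp: dist_real_def)
  qed
qed

lemma K_inter_01_nonempty: "K \<inter> {0<..<1} \<noteq> {}"
proof -
  obtain y where "y \<in> K" "y \<noteq> 0" "dist y 0 < 1"
    using K_islimpt[OF zero_in_K] unfolding islimpt_approachable by (meson zero_less_one)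
  then have "y \<in> K \<inter> {0<..<1}" using K_subset_01 by (auto simp: dist_real_def)
  then show ?thesis by blast
qed

lemma K_eq_Union_prefix_code:
  assumes "C \<subseteq> lists I" and "\<forall>w\<in>lists I. length w = N \<longrightarrow> (\<exists>\<tau>\<in>C. prefix \<tau> w)"
  shows "K = (\<Union>\<tau>\<in>C. app (S \<tau>) ` K)"
proof
  show "K \<subseteq> (\<Union>\<tau>\<in>C. app (S \<tau>) ` K)"
  proof
    fix x assume "x \<in> K"
    then obtain w where w: "w \<in> lists I" "length w = N" "x \<in> app (S w) ` K"
      using K_eq_Union_words[of N] by blast
    then obtain \<tau> u where \<tau>: "\<tau> \<in> C" "w = \<tau> @ u"
      using assms(2) by (auto simp: prefix_def)
    then have "app (S w) ` K \<subseteq> app (S \<tau>) ` K"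
      using Sw_image_K_subset[of u] w(1) by (auto simp: Sw_append image_image)
    then show "x \<in> (\<Union>\<tau>\<in>C. app (S \<tau>) ` K)" using w \<tau> by blast
  qed
  show "(\<Union>\<tau>\<in>C. app (S \<tau>) ` K) \<subseteq> K"
    using Sw_image_K_subset assms(1) by (meson UN_least subsetD)
qed

end

subsection \<open>The self-similar measure\<close>

lemma Inter_infdist_le_eq:
  fixes K :: "'a::metric_space set"
  assumes "closed K" "K \<noteq> {}"
  shows "(\<Inter>m::nat. {y. infdist y K \<le> 1 / (real m + 1)}) = K"
proof
  show "(\<Inter>m::nat. {y. infdist y K \<le> 1 / (real m + 1)}) \<subseteq> K"
  proof
    fix y assume y: "y \<in> (\<Inter>m::nat. {y. infdist y K \<le> 1 / (real m + 1)})"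
    have "infdist y K \<le> 0"
    proof (rule field_le_epsilon)
      fix e :: real assume "e > 0"
      obtain m :: nat where "1 / e < m" using reals_Archimedean2 by blast
      then have "1 / (real m + 1) < e" using \<open>e > 0\<close> by (simp add: field_simps)
      moreover have "infdist y K \<le> 1 / (real m + 1)" using y by blast
      ultimately show "infdist y K \<le> 0 + e" by linarith
    qed
    then show "y \<in> K"
      using infdist_nonneg[of y K] in_closure_iff_infdist_zero[OF assms(2)] closure_closed[OF assms(1)]
      by simp
  qed
qed (auto simp: infdist_zero)

locale self_similar_measure = self_similar_set I r d K
  for I :: "'i set" and r d :: "'i \<Rightarrow> real" and K :: "real set" +
  fixes p :: "'i \<Rightarrow> real" and \<mu> :: "real measure"
  assumes p_pos: "\<forall>i\<in>I. p i > 0" and p_sum: "(\<Sum>i\<in>I. p i) = 1"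
    and sets_\<mu>: "sets \<mu> = sets borel" and prob_\<mu>: "prob_space \<mu>"
    and \<mu>_self_similar:
      "\<forall>E\<in>sets borel. measure \<mu> E = (\<Sum>i\<in>I. p i * measure \<mu> ((\<lambda>x. r i * x + d i) -` E))"
begin

lemma finite_measure_\<mu>: "finite_measure \<mu>"
  using prob_\<mu> by (rule prob_space.finite_measure)

lemma measure_mono_borel: "A \<subseteq> B \<Longrightarrow> B \<in> sets borel \<Longrightarrow> measure \<mu> A \<le> measure \<mu> B"
  using finite_measure.finite_measure_mono[OF finite_measure_\<mu>] sets_\<mu> by metis

lemma measure_le_1: "measure \<mu> A \<le> 1"
  using prob_space.prob_le_1[OF prob_\<mu>] by metis

lemma measure_UNIV: "measure \<mu> UNIV = 1"
  using prob_space.prob_space[OF prob_\<mu>] sets_eq_imp_space_eq[OF sets_\<mu>] by simp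

lemma measure_map_image_ge:
  assumes "compact A" "i \<in> I"
  shows "p i * measure \<mu> A \<le> measure \<mu> (app (r i, d i) ` A)"
proof -
  let ?E = "app (r i, d i) ` A"
  have E: "?E \<in> sets borel"
    using compact_app_image[OF assms(1)] by (auto intro: borel_closed compact_imp_closed)
  have preimage: "(\<lambda>x. r i * x + d i) -` ?E = A"
    using r_nonzero[OF assms(2)] by (auto simp: app_pair)
  have "p i * measure \<mu> ((\<lambda>x. r i * x + d i) -` ?E)
      \<le> (\<Sum>j\<in>I. p j * measure \<mu> ((\<lambda>x. r j * x + d j) -` ?E))"
    by (rule member_le_sum) (use assms p_pos finite_I in auto)
  also have "\<dots> = measure \<mu> ?E" using \<mu>_self_similar E by simp
  finally show ?thesis unfolding preimage .
qed

lemma measure_Sw_image_ge: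
  "\<sigma> \<in> lists I \<Longrightarrow> compact A \<Longrightarrow> prod_list (map p \<sigma>) * measure \<mu> A \<le> measure \<mu> (app (S \<sigma>) ` A)"
proof (induction \<sigma>)
  case (Cons i s)
  then have i: "i \<in> I" and s: "s \<in> lists I" by auto
  have "p i * (prod_list (map p s) * measure \<mu> A) \<le> p i * measure \<mu> (app (S s) ` A)"
    using Cons.IH[OF s Cons.prems(2)] p_pos i by (intro mult_left_mono) auto
  also have "\<dots> \<le> measure \<mu> (app (r i, d i) ` (app (S s) ` A))"
    by (rule measure_map_image_ge) (use i compact_app_image[OF Cons.prems(2)] in auto)
  finally show ?case by (simp add: mult.assoc image_image)
qed simp

primrec hutchinson :: "nat \<Rightarrow> real set \<Rightarrow> real set" where
  "hutchinson 0 A = A"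
| "hutchinson (Suc n) A = (\<Union>i\<in>I. app (r i, d i) ` hutchinson n A)"

lemma compact_hutchinson: "compact A \<Longrightarrow> compact (hutchinson n A)"
  by (induction n) (auto intro!: compact_UN compact_app_image finite_I)

lemma measure_le_hutchinson: "compact A \<Longrightarrow> measure \<mu> A \<le> measure \<mu> (hutchinson n A)"
proof (induction n)
  case (Suc n)
  let ?preimage = "\<lambda>i. (\<lambda>x. r i * x + d i) -` hutchinson (Suc n) A"
  have borel: "hutchinson (Suc n) A \<in> sets borel"
    using compact_hutchinson[OF Suc.prems] by (intro borel_closed compact_imp_closed)
  have "measure \<mu> (hutchinson n A) = (\<Sum>i\<in>I. p i * measure \<mu> (hutchinson n A))"
    using p_sum by (simp add: sum_distrib_right[symmetric])
  also have "\<dots> \<le> (\<Sum>i\<in>I. p i * measure \<mu> (?preimage i))"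
  proof (rule sum_mono)
    fix i assume i: "i \<in> I"
    have "?preimage i \<in> sets borel"
      using borel by (rule measurable_sets_borel[rotated])
        (auto intro!: borel_measurable_continuous_onI continuous_intros)
    moreover have "hutchinson n A \<subseteq> ?preimage i" using i by (auto simp: app_pair)
    ultimately show "p i * measure \<mu> (hutchinson n A) \<le> p i * measure \<mu> (?preimage i)"
      using measure_mono_borel p_pos i by (intro mult_left_mono) auto
  qed
  also have "\<dots> = measure \<mu> (hutchinson (Suc n) A)" using \<mu>_self_similar borel by simp
  finally show ?case using Suc by linarith
qed simp

lemma hutchinson_near_K:
  assumes "\<forall>y\<in>A. \<exists>k\<in>K. \<bar>y - k\<bar> \<le> c"
  shows "\<forall>y\<in>hutchinson n A. \<exists>k\<in>K. \<bar>y - k\<bar> \<le> rmax ^ n * c"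
proof (induction n)
  case (Suc n)
  show ?case
  proof
    fix y assume "y \<in> hutchinson (Suc n) A"
    then obtain i z where iz: "i \<in> I" "z \<in> hutchinson n A" "y = app (r i, d i) z" by auto
    then obtain k where k: "k \<in> K" "\<bar>z - k\<bar> \<le> rmax ^ n * c" using Suc by blast
    have "\<bar>y - app (r i, d i) k\<bar> = \<bar>r i\<bar> * \<bar>z - k\<bar>"
      using iz(3) by (simp add: app_pair abs_mult[symmetric] algebra_simps)
    also have "\<dots> \<le> rmax * (rmax ^ n * c)"
      using abs_r_le_rmax[OF iz(1)] k(2) rmax_nonneg by (intro mult_mono) auto
    finally show "\<exists>k\<in>K. \<bar>y - k\<bar> \<le> rmax ^ Suc n * c"
      using map_image_K_subset[OF iz(1)] k(1) by (auto simp: mult.assoc)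
  qed
qed (use assms in simp)

text \<open>The Hutchinson operator does not decrease \<open>\<mu>\<close> and contracts \<open>B(0, R)\<close> into any neighbourhood
  of \<open>K\<close>.\<close>

lemma measure_cball_le_nbhd_K:
  assumes "e > 0"
  shows "measure \<mu> (cball 0 R) \<le> measure \<mu> {y. infdist y K \<le> e}"
proof (cases "R \<ge> 0")
  case True
  obtain n where n: "rmax ^ n * R < e"
  proof (cases "R = 0")
    case False
    then obtain n where "rmax ^ n < e / R" using rmax_power_less[of "e / R"] assms True by auto
    then show ?thesis using that[of n] False True by (simp add: field_simps)
  qed (use that[of 0] assms in simp)
  have "\<forall>y\<in>cball 0 R. \<exists>k\<in>K. \<bar>y - k\<bar> \<le> R"
    using zero_in_K by (auto simp: dist_real_def intro!: bexI[of _ 0])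
  then have "hutchinson n (cball 0 R) \<subseteq> {y. infdist y K \<le> e}"
  proof (intro subsetI CollectI)
    fix y assume "y \<in> hutchinson n (cball 0 R)"
    then obtain k where "k \<in> K" "\<bar>y - k\<bar> \<le> rmax ^ n * R"
      using hutchinson_near_K \<open>\<forall>y\<in>cball 0 R. \<exists>k\<in>K. \<bar>y - k\<bar> \<le> R\<close> by blast
    then show "infdist y K \<le> e" using infdist_le[of k K y] n by (simp add: dist_real_def)
  qed
  then have "measure \<mu> (hutchinson n (cball 0 R)) \<le> measure \<mu> {y. infdist y K \<le> e}"
    by (intro measure_mono_borel borel_closed closed_Collect_le continuous_intros) auto
  moreover have "measure \<mu> (cball 0 R) \<le> measure \<mu> (hutchinson n (cball 0 R))"
    by (rule measure_le_hutchinson) simp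
  ultimately show ?thesis by linarith
qed simp

lemma measure_K: "measure \<mu> K = 1"
proof -
  define T where "T m = {y. infdist y K \<le> 1 / (real m + 1)}" for m :: nat
  have "range T \<subseteq> sets \<mu>"
    unfolding T_def sets_\<mu> by (auto intro!: borel_closed closed_Collect_le continuous_intros)
  moreover have "decseq T"
  proof (rule decseq_SucI)
    fix m
    have "1 / (real (Suc m) + 1) \<le> 1 / (real m + 1)" by (intro divide_left_mono) auto
    then show "T (Suc m) \<subseteq> T m" unfolding T_def by auto
  qed
  moreover have "(\<Inter>m. T m) = K"
    unfolding T_def by (rule Inter_infdist_le_eq[OF compact_imp_closed[OF compact_K] K_nonempty])
  ultimately have "(\<lambda>m. measure \<mu> (T m)) \<longlonglongrightarrow> measure \<mu> K"
    using finite_measure.finite_Lim_measure_decseq[OF finite_measure_\<mu>, of T] by simp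
  then have le_K: "measure \<mu> (cball 0 (real R)) \<le> measure \<mu> K" for R :: nat
    using measure_cball_le_nbhd_K unfolding T_def by (intro LIMSEQ_le_const) auto
  have "x \<in> cball 0 (real (nat \<lceil>\<bar>x\<bar>\<rceil>))" for x :: real
    by (auto simp: dist_real_def)
  then have "(\<Union>R::nat. cball (0::real) (real R)) = UNIV" by blast
  moreover have "incseq (\<lambda>R::nat. cball (0::real) (real R))"
    unfolding incseq_def by auto
  moreover have "range (\<lambda>R::nat. cball (0::real) (real R)) \<subseteq> sets \<mu>"
    unfolding sets_\<mu> by auto
  ultimately have "(\<lambda>R::nat. measure \<mu> (cball 0 (real R))) \<longlonglongrightarrow> 1"
    using finite_measure.finite_Lim_measure_incseq[OF finite_measure_\<mu>,
        of "\<lambda>R::nat. cball (0::real) (real R)"] measure_UNIV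
    by simp
  then have "1 \<le> measure \<mu> K" using le_K by (intro LIMSEQ_le_const2) auto
  then show ?thesis using measure_le_1[of K] by linarith
qed

lemma measure_compl_K: "measure \<mu> (UNIV - K) = 0"
  using finite_measure.finite_measure_Diff[OF finite_measure_\<mu>, of UNIV K] sets_\<mu>
    borel_closed[OF compact_imp_closed[OF compact_K]] measure_K measure_UNIV by simp

lemma measure_cball_pos:
  assumes "x \<in> K" "\<delta> > 0"
  shows "measure \<mu> (cball x \<delta>) > 0"
proof -
  obtain n where n: "rmax ^ n < \<delta>" using rmax_power_less assms by blast
  obtain \<sigma> k where \<sigma>: "\<sigma> \<in> lists I" "length \<sigma> = n" "k \<in> K" "x = app (S \<sigma>) k"
    using K_eq_Union_words[of n] assms by blast
  have "app (S \<sigma>) ` {0..1} \<subseteq> cball x \<delta>"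
    using dist_app_Sw_le[OF \<sigma>(1,3)] n \<sigma>(2,4) by (force simp: dist_real_def abs_minus_commute)
  then have "measure \<mu> (app (S \<sigma>) ` {0..1}) \<le> measure \<mu> (cball x \<delta>)"
    by (rule measure_mono_borel) simp
  moreover have "prod_list (map p \<sigma>) * measure \<mu> {0..1} \<le> measure \<mu> (app (S \<sigma>) ` {0..1})"
    by (rule measure_Sw_image_ge[OF \<sigma>(1)]) auto
  moreover have "prod_list (map p \<sigma>) > 0" using \<sigma>(1) p_pos by (induction \<sigma>) auto
  moreover have "measure \<mu> {0..1} = 1"
    using measure_mono_borel[OF K_subset_01] measure_K measure_le_1[of "{0..1}"] by simp
  ultimately show ?thesis by simp
qed

end

subsection \<open>Net intervals: children in normalised coordinates\<close>

locale net_intervals = self_similar_set I r d K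
  for I :: "'i set" and r d :: "'i \<Rightarrow> real" and K :: "real set" +
  fixes \<Phi> :: "'i itrule"
  assumes iteration_rule: "is_iteration_rule I r d K \<Phi>"
begin

fun net_inv :: "npair \<Rightarrow> bool" where
  "net_inv (\<Delta>, v) \<longleftrightarrow> fst \<Delta> < snd \<Delta> \<and> finite v \<and>
     (\<forall>f\<in>v. \<exists>\<sigma>\<in>lists I. acomp (Tint \<Delta>) f = S \<sigma>) \<and>
     K \<inter> {fst \<Delta><..<snd \<Delta>} \<subseteq> (\<Union>f\<in>v. app (acomp (Tint \<Delta>) f) ` K) \<and>
     K \<inter> {fst \<Delta><..<snd \<Delta>} \<noteq> {}"

declare net_inv.simps [simp del]

lemma net_invD:
  assumes "net_inv (\<Delta>, v)"
  shows "fst \<Delta> < snd \<Delta>" "finite v" "f \<in> v \<Longrightarrow> \<exists>\<sigma>\<in>lists I. acomp (Tint \<Delta>) f = S \<sigma>"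
    "K \<inter> {fst \<Delta><..<snd \<Delta>} \<subseteq> (\<Union>f\<in>v. app (acomp (Tint \<Delta>) f) ` K)"
    "K \<inter> {fst \<Delta><..<snd \<Delta>} \<noteq> {}"
  using assms by (auto simp: net_inv.simps)

lemma net_inv_fst_nonzero:
  assumes "net_inv (\<Delta>, v)" "f \<in> v"
  shows "fst f \<noteq> 0"
proof -
  obtain \<sigma> where "\<sigma> \<in> lists I" "acomp (Tint \<Delta>) f = S \<sigma>" using net_invD(3)[OF assms] by blast
  then show ?thesis using fst_Sw_nonzero[of \<sigma>] by (metis fst_acomp mult_zero_right)
qed

lemma Phi_code:
  assumes "net_inv (\<Delta>, v)" "f \<in> v"
  shows "finite (\<Phi> v f)" "\<Phi> v f \<subseteq> lists I" "K = (\<Union>\<tau>\<in>\<Phi> v f. app (S \<tau>) ` K)"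
proof -
  have code: "\<forall>v. finite v \<and> (\<forall>f\<in>v. fst f \<noteq> 0) \<longrightarrow> (\<forall>f\<in>v.
        finite (\<Phi> v f) \<and> \<Phi> v f \<subseteq> lists I \<and>
        (\<exists>N. \<forall>n\<ge>N. \<forall>w\<in>lists I. length w = n \<longrightarrow> (\<exists>!\<sigma>. \<sigma> \<in> \<Phi> v f \<and> prefix \<sigma> w)))"
    using iteration_rule unfolding is_iteration_rule_def by (rule conjunct1)
  have "finite v" "\<forall>f\<in>v. fst f \<noteq> 0"
    using net_invD(2)[OF assms(1)] net_inv_fst_nonzero[OF assms(1)] by auto
  note f_code = code[rule_format, OF conjI[OF this] assms(2)]
  then obtain N where N: "\<forall>n\<ge>N. \<forall>w\<in>lists I. length w = n \<longrightarrow> (\<exists>!\<sigma>. \<sigma> \<in> \<Phi> v f \<and> prefix \<sigma> w)"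
    by (elim conjE exE)
  have "\<exists>\<tau>\<in>\<Phi> v f. prefix \<tau> w" if "w \<in> lists I" "length w = N" for w
    using N[rule_format, OF order_refl that] by (metis ex1_implies_ex)
  then show "finite (\<Phi> v f)" "\<Phi> v f \<subseteq> lists I" "K = (\<Union>\<tau>\<in>\<Phi> v f. app (S \<tau>) ` K)"
    using f_code K_eq_Union_prefix_code[of "\<Phi> v f" N] by auto
qed

text \<open>The objects of the definition of \<open>raw_children\<close>, pulled back by \<open>T\<^sub>\<Delta>\<close>: by
  \<open>raw_children_eq_rescale\<close> the children of \<open>(\<Delta>, v)\<close> depend on \<open>v\<close> only.\<close>

definition Y_norm :: "aff set \<Rightarrow> aff set" where
  "Y_norm v = {acomp f (S \<tau>) | f \<tau>. f \<in> v \<and> \<tau> \<in> \<Phi> v f}"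

definition cut_points :: "aff set \<Rightarrow> real set" where
  "cut_points v = {0, 1} \<union> {app g z | g z. g \<in> Y_norm v \<and> z \<in> {0, 1} \<and> app g z \<in> {0..1}}"

definition is_gap :: "aff set \<Rightarrow> real \<Rightarrow> real \<Rightarrow> bool" where
  "is_gap v u u' \<longleftrightarrow> u \<in> cut_points v \<and> u' \<in> cut_points v \<and> u < u' \<and>
     (\<forall>z\<in>cut_points v. \<not> (u < z \<and> z < u')) \<and> (\<exists>g\<in>Y_norm v. app g ` K \<inter> {u<..<u'} \<noteq> {})"

definition gap_nbrs :: "aff set \<Rightarrow> real \<Rightarrow> real \<Rightarrow> aff set" where
  "gap_nbrs v u u' = {acomp (ainv (Tint (u, u'))) g | g. g \<in> Y_norm v \<and> app g ` K \<inter> {u<..<u'} \<noteq> {}}"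

definition raw_children_norm :: "aff set \<Rightarrow> npair set" where
  "raw_children_norm v = {((u, u'), gap_nbrs v u u') | u u'. is_gap v u u'}"

definition rescale :: "real \<times> real \<Rightarrow> npair \<Rightarrow> npair" where
  "rescale \<Delta> = (\<lambda>((u, u'), w). ((app (Tint \<Delta>) u, app (Tint \<Delta>) u'), w))"

lemma rescale_0_1 [simp]: "rescale \<Delta> ((0, 1), w) = (\<Delta>, w)"
  by (simp add: rescale_def)

lemma rescale_inj: "fst \<Delta> < snd \<Delta> \<Longrightarrow> rescale \<Delta> x = rescale \<Delta> y \<longleftrightarrow> x = y"
  by (cases x; cases y) (auto simp: rescale_def app_Tint_eq_iff)

lemma relpos_app_Tint: "fst \<Delta> < snd \<Delta> \<Longrightarrow> relpos \<Delta> (app (Tint \<Delta>) u, app (Tint \<Delta>) u') = (u, u')"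
  by (simp add: relpos_def app_Tint)

lemma finite_Y_norm: "net_inv (\<Delta>, v) \<Longrightarrow> finite (Y_norm v)"
proof -
  assume inv: "net_inv (\<Delta>, v)"
  have "Y_norm v = (\<Union>f\<in>v. (\<lambda>\<tau>. acomp f (S \<tau>)) ` \<Phi> v f)" unfolding Y_norm_def by auto
  then show ?thesis using net_invD(2)[OF inv] Phi_code(1)[OF inv] by auto
qed

lemma Y_norm_Sw:
  assumes "net_inv (\<Delta>, v)" "g \<in> Y_norm v"
  shows "\<exists>\<sigma>\<in>lists I. acomp (Tint \<Delta>) g = S \<sigma>"
proof -
  obtain f \<tau> where g: "g = acomp f (S \<tau>)" "f \<in> v" "\<tau> \<in> \<Phi> v f"
    using assms(2) unfolding Y_norm_def by blast
  obtain \<sigma> where \<sigma>: "\<sigma> \<in> lists I" "acomp (Tint \<Delta>) f = S \<sigma>" using net_invD(3)[OF assms(1) g(2)] by blast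
  have "\<tau> \<in> lists I" using Phi_code(2)[OF assms(1) g(2)] g(3) by blast
  moreover have "acomp (Tint \<Delta>) g = S (\<sigma> @ \<tau>)" using g \<sigma> by (simp add: Sw_append acomp_assoc[symmetric])
  ultimately show ?thesis using \<sigma>(1) by (intro bexI[of _ "\<sigma> @ \<tau>"]) auto
qed

lemma K_inter_interior_subset_Y_norm:
  assumes "net_inv (\<Delta>, v)"
  shows "K \<inter> {fst \<Delta><..<snd \<Delta>} \<subseteq> (\<Union>g\<in>Y_norm v. app (acomp (Tint \<Delta>) g) ` K)"
proof
  fix x assume "x \<in> K \<inter> {fst \<Delta><..<snd \<Delta>}"
  then obtain f k where f: "f \<in> v" "k \<in> K" "x = app (acomp (Tint \<Delta>) f) k"
    using net_invD(4)[OF assms] by blast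
  then obtain \<tau> k' where \<tau>: "\<tau> \<in> \<Phi> v f" "k' \<in> K" "k = app (S \<tau>) k'"
    using Phi_code(3)[OF assms f(1)] by blast
  then have "acomp f (S \<tau>) \<in> Y_norm v" using f unfolding Y_norm_def by blast
  moreover have "x = app (acomp (Tint \<Delta>) (acomp f (S \<tau>))) k'" using f \<tau> by simp
  ultimately show "x \<in> (\<Union>g\<in>Y_norm v. app (acomp (Tint \<Delta>) g) ` K)" using \<tau> by blast
qed

lemma cut_points_subset: "cut_points v \<subseteq> {0..1}"
  unfolding cut_points_def by auto

lemma finite_cut_points: "net_inv (\<Delta>, v) \<Longrightarrow> finite (cut_points v)"
proof -
  assume inv: "net_inv (\<Delta>, v)"
  have "cut_points v \<subseteq> {0, 1} \<union> (\<lambda>(g, z). app g z) ` (Y_norm v \<times> {0, 1})"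
    unfolding cut_points_def by auto
  then show ?thesis using finite_Y_norm[OF inv] finite_subset by fastforce
qed

lemma finite_raw_children_norm: "net_inv (\<Delta>, v) \<Longrightarrow> finite (raw_children_norm v)"
proof -
  assume inv: "net_inv (\<Delta>, v)"
  have "raw_children_norm v \<subseteq> (\<lambda>(u, u'). ((u, u'), gap_nbrs v u u')) ` (cut_points v \<times> cut_points v)"
    unfolding raw_children_norm_def is_gap_def by auto
  then show ?thesis using finite_cut_points[OF inv] finite_subset by blast
qed

lemma K_meets_gap_iff:
  assumes inv: "net_inv (\<Delta>, v)" and "0 \<le> u" "u' \<le> 1"
  shows "{app (Tint \<Delta>) u<..<app (Tint \<Delta>) u'} \<inter> K \<noteq> {} \<longleftrightarrow>
         (\<exists>g\<in>Y_norm v. app g ` K \<inter> {u<..<u'} \<noteq> {})"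
proof
  have \<Delta>: "fst \<Delta> < snd \<Delta>" using net_invD(1)[OF inv] .
  assume "{app (Tint \<Delta>) u<..<app (Tint \<Delta>) u'} \<inter> K \<noteq> {}"
  then obtain x where x: "x \<in> K" "app (Tint \<Delta>) u < x" "x < app (Tint \<Delta>) u'" by auto
  moreover have "fst \<Delta> \<le> app (Tint \<Delta>) u" "app (Tint \<Delta>) u' \<le> snd \<Delta>"
    using app_Tint_le_iff[OF \<Delta>, of 0 u] app_Tint_le_iff[OF \<Delta>, of u' 1] assms(2,3) by auto
  ultimately obtain g k where g: "g \<in> Y_norm v" "k \<in> K" "x = app (acomp (Tint \<Delta>) g) k"
    using K_inter_interior_subset_Y_norm[OF inv] by fastforce
  then have "app g k \<in> app g ` K \<inter> {u<..<u'}" using x app_Tint_less_iff[OF \<Delta>] by auto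
  then show "\<exists>g\<in>Y_norm v. app g ` K \<inter> {u<..<u'} \<noteq> {}" using g(1) by blast
next
  have \<Delta>: "fst \<Delta> < snd \<Delta>" using net_invD(1)[OF inv] .
  assume "\<exists>g\<in>Y_norm v. app g ` K \<inter> {u<..<u'} \<noteq> {}"
  then obtain g k where g: "g \<in> Y_norm v" "k \<in> K" "app g k \<in> {u<..<u'}" by blast
  have "app (acomp (Tint \<Delta>) g) k \<in> K"
    using Y_norm_Sw[OF inv g(1)] Sw_image_K_subset g(2) by fastforce
  moreover have "app (acomp (Tint \<Delta>) g) k \<in> {app (Tint \<Delta>) u<..<app (Tint \<Delta>) u'}"
    using g(3) app_Tint_less_iff[OF \<Delta>] by auto
  ultimately show "{app (Tint \<Delta>) u<..<app (Tint \<Delta>) u'} \<inter> K \<noteq> {}" by blast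
qed

lemma raw_cut_points_eq:
  assumes \<Delta>: "fst \<Delta> < snd \<Delta>"
  shows "{fst \<Delta>, snd \<Delta>} \<union> {app g z | g z. g \<in> acomp (Tint \<Delta>) ` Y_norm v \<and> z \<in> {0, 1} \<and>
           app g z \<in> {fst \<Delta>..snd \<Delta>}} = app (Tint \<Delta>) ` cut_points v" (is "?P = _")
proof (intro equalityI subsetI)
  have range: "app (acomp (Tint \<Delta>) g) z \<in> {fst \<Delta>..snd \<Delta>} \<longleftrightarrow> app g z \<in> {0..1}" for g z
    using app_Tint_le_iff[OF \<Delta>, of 0 "app g z"] app_Tint_le_iff[OF \<Delta>, of "app g z" 1] by auto
  fix x
  show "x \<in> app (Tint \<Delta>) ` cut_points v" if "x \<in> ?P"
  proof (cases "x \<in> {fst \<Delta>, snd \<Delta>}")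
    case True
    moreover have "0 \<in> cut_points v" "1 \<in> cut_points v" unfolding cut_points_def by auto
    ultimately show ?thesis by (metis app_Tint_0 app_Tint_1 empty_iff image_eqI insertE)
  next
    case False
    with that obtain g z where g: "g \<in> Y_norm v" "z \<in> {0, 1}" "x = app (acomp (Tint \<Delta>) g) z"
        "app (acomp (Tint \<Delta>) g) z \<in> {fst \<Delta>..snd \<Delta>}"
      by blast
    then have "app g z \<in> cut_points v" using range unfolding cut_points_def by blast
    then show ?thesis using g(3) by (intro image_eqI[of _ _ "app g z"]) simp_all
  qed
  show "x \<in> ?P" if x: "x \<in> app (Tint \<Delta>) ` cut_points v"
  proof -
    obtain y where y: "y \<in> cut_points v" "x = app (Tint \<Delta>) y" using x by blast
    then consider "y = 0" | "y = 1"
      | g z where "g \<in> Y_norm v" "z \<in> {0, 1}" "y = app g z" "app g z \<in> {0..1}"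
      unfolding cut_points_def by blast
    then show ?thesis
    proof cases
      case 3
      then show ?thesis
        using range y(2) by (intro UnI2 CollectI exI[of _ "acomp (Tint \<Delta>) g"] exI[of _ z]) auto
    qed (use y in auto)
  qed
qed

lemma raw_gap_iff:
  assumes inv: "net_inv (\<Delta>, v)"
  defines "h \<equiv> app (Tint \<Delta>)"
  shows "h u \<in> h ` cut_points v \<and> h u' \<in> h ` cut_points v \<and> h u < h u' \<and>
           (\<forall>z\<in>h ` cut_points v. \<not> (h u < z \<and> z < h u')) \<and> {h u<..<h u'} \<inter> K \<noteq> {}
         \<longleftrightarrow> is_gap v u u'"
proof -
  have \<Delta>: "fst \<Delta> < snd \<Delta>" using net_invD(1)[OF inv] .
  have less: "h x < h y \<longleftrightarrow> x < y" for x y unfolding h_def using app_Tint_less_iff[OF \<Delta>] .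
  have mem: "h x \<in> h ` cut_points v \<longleftrightarrow> x \<in> cut_points v" for x
    unfolding h_def using app_Tint_eq_iff[OF \<Delta>] by auto
  have between: "(\<forall>z\<in>h ` cut_points v. \<not> (h u < z \<and> z < h u')) \<longleftrightarrow> (\<forall>z\<in>cut_points v. \<not> (u < z \<and> z < u'))"
    using less by auto
  have meets: "u \<in> cut_points v \<Longrightarrow> u' \<in> cut_points v \<Longrightarrow>
      {h u<..<h u'} \<inter> K \<noteq> {} \<longleftrightarrow> (\<exists>g\<in>Y_norm v. app g ` K \<inter> {u<..<u'} \<noteq> {})"
    using K_meets_gap_iff[OF inv] cut_points_subset unfolding h_def by (meson atLeastAtMost_iff subsetD)
  show ?thesis unfolding is_gap_def mem less between using meets by blast
qed

lemma raw_gap_nbrs_eq: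
  assumes \<Delta>: "fst \<Delta> < snd \<Delta>" and "u < u'"
  defines "h \<equiv> app (Tint \<Delta>)"
  shows "{acomp (ainv (Tint (h u, h u'))) g | g. g \<in> acomp (Tint \<Delta>) ` Y_norm v \<and>
            app g ` K \<inter> {h u<..<h u'} \<noteq> {}} = gap_nbrs v u u'"
proof -
  have meets: "app (acomp (Tint \<Delta>) g) ` K \<inter> {h u<..<h u'} \<noteq> {} \<longleftrightarrow> app g ` K \<inter> {u<..<u'} \<noteq> {}" for g
    using app_Tint_less_iff[OF \<Delta>] unfolding h_def by auto
  have pull: "acomp (ainv (Tint (h u, h u'))) (acomp (Tint \<Delta>) g) = acomp (ainv (Tint (u, u'))) g" for g
    unfolding h_def using ainv_Tint_app_Tint[OF assms(1,2)] .
  show ?thesis unfolding gap_nbrs_def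
  proof (intro set_eqI iffI)
    fix x assume "x \<in> {acomp (ainv (Tint (h u, h u'))) g | g. g \<in> acomp (Tint \<Delta>) ` Y_norm v \<and>
        app g ` K \<inter> {h u<..<h u'} \<noteq> {}}"
    then obtain g where "g \<in> Y_norm v" "app (acomp (Tint \<Delta>) g) ` K \<inter> {h u<..<h u'} \<noteq> {}"
        "x = acomp (ainv (Tint (h u, h u'))) (acomp (Tint \<Delta>) g)"
      by blast
    then show "x \<in> {acomp (ainv (Tint (u, u'))) g | g. g \<in> Y_norm v \<and> app g ` K \<inter> {u<..<u'} \<noteq> {}}"
      unfolding meets pull by blast
  next
    fix x assume "x \<in> {acomp (ainv (Tint (u, u'))) g | g. g \<in> Y_norm v \<and> app g ` K \<inter> {u<..<u'} \<noteq> {}}"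
    then obtain g where g: "g \<in> Y_norm v" "app g ` K \<inter> {u<..<u'} \<noteq> {}"
        "x = acomp (ainv (Tint (u, u'))) g"
      by blast
    then have "x = acomp (ainv (Tint (h u, h u'))) (acomp (Tint \<Delta>) g)"
      "app (acomp (Tint \<Delta>) g) ` K \<inter> {h u<..<h u'} \<noteq> {}"
      unfolding meets pull by simp_all
    with g(1) show "x \<in> {acomp (ainv (Tint (h u, h u'))) g | g. g \<in> acomp (Tint \<Delta>) ` Y_norm v \<and>
        app g ` K \<inter> {h u<..<h u'} \<noteq> {}}"
      by blast
  qed
qed

lemma raw_children_eq_rescale:
  assumes inv: "net_inv (\<Delta>, v)"
  shows "raw_children r d K \<Phi> (\<Delta>, v) = rescale \<Delta> ` raw_children_norm v"
proof -
  let ?h = "app (Tint \<Delta>)"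
  have \<Delta>: "fst \<Delta> < snd \<Delta>" using net_invD(1)[OF inv] .
  define raw_gap where "raw_gap y y' \<longleftrightarrow> y \<in> ?h ` cut_points v \<and> y' \<in> ?h ` cut_points v \<and> y < y' \<and>
    (\<forall>z\<in>?h ` cut_points v. \<not> (y < z \<and> z < y')) \<and> {y<..<y'} \<inter> K \<noteq> {}" for y y'
  define raw_nbrs where "raw_nbrs y y' = {acomp (ainv (Tint (y, y'))) g | g. g \<in> acomp (Tint \<Delta>) ` Y_norm v \<and>
    app g ` K \<inter> {y<..<y'} \<noteq> {}}" for y y'
  have Y: "{acomp (Tint \<Delta>) (acomp f (S \<tau>)) | f \<tau>. f \<in> v \<and> \<tau> \<in> \<Phi> v f} = acomp (Tint \<Delta>) ` Y_norm v"
    unfolding Y_norm_def by blast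
  have raw: "raw_children r d K \<Phi> (\<Delta>, v) = {((y, y'), raw_nbrs y y') | y y'. raw_gap y y'}"
    unfolding raw_children_def Let_def fst_conv snd_conv Y raw_cut_points_eq[OF \<Delta>] raw_gap_def raw_nbrs_def ..
  have gap: "raw_gap (?h u) (?h u') \<longleftrightarrow> is_gap v u u'" for u u'
    unfolding raw_gap_def by (rule raw_gap_iff[OF inv])
  have nbrs: "is_gap v u u' \<Longrightarrow> raw_nbrs (?h u) (?h u') = gap_nbrs v u u'" for u u'
    unfolding raw_nbrs_def by (rule raw_gap_nbrs_eq[OF \<Delta>]) (simp add: is_gap_def)
  show ?thesis unfolding raw
  proof (intro equalityI subsetI)
    fix x assume "x \<in> {((y, y'), raw_nbrs y y') | y y'. raw_gap y y'}"
    then obtain y y' where x: "x = ((y, y'), raw_nbrs y y')" "raw_gap y y'" by blast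
    obtain u u' where "y = ?h u" "y' = ?h u'" using app_Tint_surj[OF \<Delta>] by metis
    with x have "is_gap v u u'" "x = rescale \<Delta> ((u, u'), gap_nbrs v u u')"
      using gap nbrs by (auto simp: rescale_def)
    then show "x \<in> rescale \<Delta> ` raw_children_norm v" unfolding raw_children_norm_def by blast
  next
    fix x assume "x \<in> rescale \<Delta> ` raw_children_norm v"
    then obtain u u' where x: "x = rescale \<Delta> ((u, u'), gap_nbrs v u u')" "is_gap v u u'"
      unfolding raw_children_norm_def by blast
    then have "x = ((?h u, ?h u'), raw_nbrs (?h u) (?h u'))" "raw_gap (?h u) (?h u')"
      using gap nbrs by (auto simp: rescale_def)
    then show "x \<in> {((y, y'), raw_nbrs y y') | y y'. raw_gap y y'}" by blast
  qed
qed

lemma net_inv_rescale: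
  assumes inv: "net_inv (\<Delta>, v)" and child: "((u, u'), w) \<in> raw_children_norm v"
  shows "net_inv (rescale \<Delta> ((u, u'), w))"
proof -
  let ?h = "app (Tint \<Delta>)"
  have \<Delta>: "fst \<Delta> < snd \<Delta>" using net_invD(1)[OF inv] .
  have gap: "is_gap v u u'" and w: "w = gap_nbrs v u u'"
    using child unfolding raw_children_norm_def by auto
  then have uu': "0 \<le> u" "u < u'" "u' \<le> 1"
    using cut_points_subset[of v] unfolding is_gap_def by auto
  have T: "Tint (?h u, ?h u') = acomp (Tint \<Delta>) (Tint (u, u'))" by (rule Tint_app_Tint)
  have pull_back: "acomp (Tint (?h u, ?h u')) (acomp (ainv (Tint (u, u'))) g) = acomp (Tint \<Delta>) g" for g
    unfolding T acomp_assoc using acomp_ainv[of "Tint (u, u')"] uu' by simp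
  have "w \<subseteq> acomp (ainv (Tint (u, u'))) ` Y_norm v"
    unfolding w gap_nbrs_def by blast
  then have "finite w"
    using finite_Y_norm[OF inv] finite_subset by blast
  moreover have "\<forall>f\<in>w. \<exists>\<sigma>\<in>lists I. acomp (Tint (?h u, ?h u')) f = S \<sigma>"
  proof
    fix f assume "f \<in> w"
    then obtain g where "g \<in> Y_norm v" "f = acomp (ainv (Tint (u, u'))) g"
      unfolding w gap_nbrs_def by blast
    then show "\<exists>\<sigma>\<in>lists I. acomp (Tint (?h u, ?h u')) f = S \<sigma>"
      using Y_norm_Sw[OF inv] pull_back by simp
  qed
  moreover have "K \<inter> {?h u<..<?h u'} \<subseteq> (\<Union>f\<in>w. app (acomp (Tint (?h u, ?h u')) f) ` K)"
  proof
    fix x assume x: "x \<in> K \<inter> {?h u<..<?h u'}"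
    moreover have "fst \<Delta> \<le> ?h u" "?h u' \<le> snd \<Delta>"
      using app_Tint_le_iff[OF \<Delta>, of 0 u] app_Tint_le_iff[OF \<Delta>, of u' 1] uu' by auto
    ultimately obtain g k where g: "g \<in> Y_norm v" "k \<in> K" "x = app (acomp (Tint \<Delta>) g) k"
      using K_inter_interior_subset_Y_norm[OF inv] by fastforce
    then have "app g k \<in> {u<..<u'}" using x app_Tint_less_iff[OF \<Delta>] by auto
    then have "acomp (ainv (Tint (u, u'))) g \<in> w" using g unfolding w gap_nbrs_def by blast
    moreover have "x = app (acomp (Tint (?h u, ?h u')) (acomp (ainv (Tint (u, u'))) g)) k"
      using g(3) unfolding pull_back .
    ultimately show "x \<in> (\<Union>f\<in>w. app (acomp (Tint (?h u, ?h u')) f) ` K)"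
      using g(2) by blast
  qed
  moreover have "K \<inter> {?h u<..<?h u'} \<noteq> {}"
    using K_meets_gap_iff[OF inv uu'(1,3)] gap unfolding is_gap_def by blast
  ultimately show ?thesis
    using uu' app_Tint_less_iff[OF \<Delta>] by (simp add: rescale_def net_inv.simps)
qed

lemma net_inv_raw_children: "net_inv x \<Longrightarrow> y \<in> raw_children r d K \<Phi> x \<Longrightarrow> net_inv y"
  using raw_children_eq_rescale[of "fst x" "snd x"] net_inv_rescale[of "fst x" "snd x"] by auto

definition norm_same :: "aff set \<Rightarrow> aff set \<Rightarrow> bool" where
  "norm_same v w \<longleftrightarrow> raw_children_norm v = {((0, 1), w)}"

definition norm_stops :: "aff set \<Rightarrow> bool" where
  "norm_stops v \<longleftrightarrow> \<not> (\<exists>w. norm_same v w)"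

definition children_norm :: "aff set \<Rightarrow> npair set" where
  "children_norm v = \<Union> {raw_children_norm w | w. norm_same\<^sup>*\<^sup>* v w \<and> norm_stops w}"

lemma same_step_iff:
  assumes inv: "net_inv (\<Delta>, v)"
  shows "same_step r d K \<Phi> (\<Delta>, v) y \<longleftrightarrow> (\<exists>w. norm_same v w \<and> y = (\<Delta>, w))"
proof
  have \<Delta>: "fst \<Delta> < snd \<Delta>" using net_invD(1)[OF inv] .
  assume "same_step r d K \<Phi> (\<Delta>, v) y"
  then have y: "rescale \<Delta> ` raw_children_norm v = {y}" "fst y = \<Delta>"
    unfolding same_step_def raw_children_eq_rescale[OF inv] by auto
  then obtain c where c: "c \<in> raw_children_norm v" "y = rescale \<Delta> c" by blast
  then have single: "raw_children_norm v = {c}" using y(1) rescale_inj[OF \<Delta>] by blast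
  obtain u u' w where c_def: "c = ((u, u'), w)" by (metis prod.collapse)
  have "app (Tint \<Delta>) u = app (Tint \<Delta>) 0 \<and> app (Tint \<Delta>) u' = app (Tint \<Delta>) 1"
    using y(2) c(2) unfolding c_def by (simp add: rescale_def prod_eq_iff)
  then have "u = 0" "u' = 1" using app_Tint_eq_iff[OF \<Delta>] by blast+
  then show "\<exists>w. norm_same v w \<and> y = (\<Delta>, w)"
    using single c c_def unfolding norm_same_def by auto
next
  assume "\<exists>w. norm_same v w \<and> y = (\<Delta>, w)"
  then show "same_step r d K \<Phi> (\<Delta>, v) y"
    unfolding same_step_def raw_children_eq_rescale[OF inv] norm_same_def by auto
qed

lemma net_inv_norm_same:
  assumes "net_inv (\<Delta>, v)" "norm_same\<^sup>*\<^sup>* v w"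
  shows "net_inv (\<Delta>, w)"
  using assms(2,1)
proof (induction rule: rtranclp_induct)
  case (step w w')
  then show ?case
    using net_inv_rescale[OF step.IH[OF step.prems], of 0 1 w'] unfolding norm_same_def by simp
qed

lemma stops_iff: "net_inv (\<Delta>, v) \<Longrightarrow> stops r d K \<Phi> (\<Delta>, v) \<longleftrightarrow> norm_stops v"
  unfolding stops_def norm_stops_def using same_step_iff by blast

lemma same_step_rtranclp_iff:
  assumes inv: "net_inv (\<Delta>, v)"
  shows "(same_step r d K \<Phi>)\<^sup>*\<^sup>* (\<Delta>, v) z \<longleftrightarrow> (\<exists>w. norm_same\<^sup>*\<^sup>* v w \<and> z = (\<Delta>, w))"
proof
  assume "(same_step r d K \<Phi>)\<^sup>*\<^sup>* (\<Delta>, v) z"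
  then show "\<exists>w. norm_same\<^sup>*\<^sup>* v w \<and> z = (\<Delta>, w)"
  proof (induction rule: rtranclp_induct)
    case (step y z)
    then obtain w where w: "norm_same\<^sup>*\<^sup>* v w" "y = (\<Delta>, w)" by blast
    with step(2) obtain w' where w': "norm_same w w'" "z = (\<Delta>, w')"
      using same_step_iff[OF net_inv_norm_same[OF inv w(1)]] by blast
    have "norm_same\<^sup>*\<^sup>* v w'" using w(1) w'(1) by (rule rtranclp.rtrancl_into_rtrancl)
    with w'(2) show ?case by blast
  qed blast
next
  assume "\<exists>w. norm_same\<^sup>*\<^sup>* v w \<and> z = (\<Delta>, w)"
  then obtain w where w: "norm_same\<^sup>*\<^sup>* v w" "z = (\<Delta>, w)" by blast
  have "(same_step r d K \<Phi>)\<^sup>*\<^sup>* (\<Delta>, v) (\<Delta>, w)" using w(1)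
  proof (induction rule: rtranclp_induct)
    case (step y z)
    then have "same_step r d K \<Phi> (\<Delta>, y) (\<Delta>, z)"
      using same_step_iff[OF net_inv_norm_same[OF inv step(1)]] by blast
    with step(3) show ?case by (meson rtranclp.rtrancl_into_rtrancl)
  qed simp
  then show "(same_step r d K \<Phi>)\<^sup>*\<^sup>* (\<Delta>, v) z" using w(2) by simp
qed

lemma children_eq_rescale:
  assumes inv: "net_inv (\<Delta>, v)"
  shows "children r d K \<Phi> (\<Delta>, v) = rescale \<Delta> ` children_norm v"
proof -
  have "{raw_children r d K \<Phi> z | z. (same_step r d K \<Phi>)\<^sup>*\<^sup>* (\<Delta>, v) z \<and> stops r d K \<Phi> z}
      = {rescale \<Delta> ` raw_children_norm w | w. norm_same\<^sup>*\<^sup>* v w \<and> norm_stops w}"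
  proof (intro set_eqI iffI)
    fix X assume "X \<in> {raw_children r d K \<Phi> z | z. (same_step r d K \<Phi>)\<^sup>*\<^sup>* (\<Delta>, v) z \<and> stops r d K \<Phi> z}"
    then obtain z where z: "X = raw_children r d K \<Phi> z" "(same_step r d K \<Phi>)\<^sup>*\<^sup>* (\<Delta>, v) z"
        "stops r d K \<Phi> z"
      by blast
    then obtain w where w: "X = raw_children r d K \<Phi> (\<Delta>, w)" "norm_same\<^sup>*\<^sup>* v w"
        "stops r d K \<Phi> (\<Delta>, w)"
      unfolding same_step_rtranclp_iff[OF inv] by blast
    moreover note inv_w = net_inv_norm_same[OF inv w(2)]
    ultimately have "X = rescale \<Delta> ` raw_children_norm w" "norm_stops w"
      using raw_children_eq_rescale stops_iff by auto
    with w(2) show "X \<in> {rescale \<Delta> ` raw_children_norm w | w. norm_same\<^sup>*\<^sup>* v w \<and> norm_stops w}"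
      by blast
  next
    fix X assume "X \<in> {rescale \<Delta> ` raw_children_norm w | w. norm_same\<^sup>*\<^sup>* v w \<and> norm_stops w}"
    then obtain w where w: "X = rescale \<Delta> ` raw_children_norm w" "norm_same\<^sup>*\<^sup>* v w" "norm_stops w"
      by blast
    moreover note inv_w = net_inv_norm_same[OF inv w(2)]
    ultimately have "X = raw_children r d K \<Phi> (\<Delta>, w)" "stops r d K \<Phi> (\<Delta>, w)"
      "(same_step r d K \<Phi>)\<^sup>*\<^sup>* (\<Delta>, v) (\<Delta>, w)"
      using raw_children_eq_rescale stops_iff same_step_rtranclp_iff[OF inv] by auto
    then show "X \<in> {raw_children r d K \<Phi> z | z. (same_step r d K \<Phi>)\<^sup>*\<^sup>* (\<Delta>, v) z \<and> stops r d K \<Phi> z}"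
      by blast
  qed
  then show ?thesis unfolding children_def children_norm_def by auto
qed

lemma net_inv_children: "net_inv x \<Longrightarrow> y \<in> children r d K \<Phi> x \<Longrightarrow> net_inv y"
proof -
  assume inv: "net_inv x" and "y \<in> children r d K \<Phi> x"
  then obtain z where z: "y \<in> raw_children r d K \<Phi> z" "(same_step r d K \<Phi>)\<^sup>*\<^sup>* x z"
    unfolding children_def by blast
  from z(2) inv have "net_inv z"
    by (induction rule: rtranclp_induct) (auto simp: same_step_def intro: net_inv_raw_children)
  with z(1) show "net_inv y" using net_inv_raw_children by blast
qed

lemma net_inv_root: "net_inv root_pair"
proof -
  have "Tint (0, 1) = aid" by (simp add: Tint_def aid_def)
  then show ?thesis
    using K_inter_01_nonempty by (auto simp: root_pair_def net_inv.simps intro!: bexI[of _ "[]"])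
qed

lemma net_inv_netN: "x \<in> netN r d K \<Phi> n \<Longrightarrow> net_inv x"
  by (induction n arbitrary: x) (auto simp: net_inv_root intro: net_inv_children)

lemma norm_stops_unique:
  assumes "norm_same\<^sup>*\<^sup>* v w1" "norm_same\<^sup>*\<^sup>* v w2" "norm_stops w1" "norm_stops w2"
  shows "w1 = w2"
proof -
  have deterministic: "norm_same v w1 \<Longrightarrow> norm_same v w2 \<Longrightarrow> w1 = w2" for v w1 w2
    unfolding norm_same_def by auto
  have final: "w = w'" if "norm_same\<^sup>*\<^sup>* w w'" "norm_stops w" for w w'
    using that(1) by (cases rule: converse_rtranclpE) (use that(2) norm_stops_def in auto)
  from assms(1) have "norm_same\<^sup>*\<^sup>* w1 w2 \<or> norm_same\<^sup>*\<^sup>* w2 w1"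
  proof (induction rule: rtranclp_induct)
    case (step y z)
    from step(3) show ?case
    proof
      assume "norm_same\<^sup>*\<^sup>* y w2"
      then show ?thesis
        by (cases rule: converse_rtranclpE) (use step(2) deterministic in blast)+
    qed (use step(2) in \<open>meson rtranclp.rtrancl_into_rtrancl\<close>)
  qed (use assms(2) in blast)
  then show ?thesis using final assms(3,4) by metis
qed

lemma children_norm_eq:
  assumes "norm_same\<^sup>*\<^sup>* v w" "norm_stops w"
  shows "children_norm v = raw_children_norm w"
proof -
  have "{raw_children_norm w' | w'. norm_same\<^sup>*\<^sup>* v w' \<and> norm_stops w'} = {raw_children_norm w}"
    using norm_stops_unique[OF assms(1) _ assms(2)] assms by blast
  then show ?thesis unfolding children_norm_def by simp
qed

lemma norm_stops_exists:
  assumes "(\<Delta>, v) \<in> netN r d K \<Phi> n"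
  shows "\<exists>w. norm_same\<^sup>*\<^sup>* v w \<and> norm_stops w"
proof -
  have inv: "net_inv (\<Delta>, v)" using net_inv_netN assms by blast
  have "\<forall>n. \<forall>x\<in>netN r d K \<Phi> n. \<exists>z. (same_step r d K \<Phi>)\<^sup>*\<^sup>* x z \<and> stops r d K \<Phi> z"
    using iteration_rule unfolding is_iteration_rule_def by (rule conjunct1[OF conjunct2])
  then obtain z where z: "(same_step r d K \<Phi>)\<^sup>*\<^sup>* (\<Delta>, v) z" "stops r d K \<Phi> z"
    using assms by blast
  then obtain w where w: "norm_same\<^sup>*\<^sup>* v w" "z = (\<Delta>, w)"
    unfolding same_step_rtranclp_iff[OF inv] by blast
  then have "norm_stops w" using stops_iff[OF net_inv_norm_same[OF inv w(1)]] z(2) by simp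
  with w(1) show ?thesis by blast
qed

lemma children_norm_in_01: "((u, u'), w) \<in> children_norm v \<Longrightarrow> 0 \<le> u \<and> u < u' \<and> u' \<le> 1"
  using cut_points_subset
  unfolding children_norm_def raw_children_norm_def is_gap_def by fastforce

lemma gap_overlap_eq:
  assumes "is_gap v u1 u1'" "is_gap v u2 u2'" "{u1<..<u1'} \<inter> {u2<..<u2'} \<noteq> {}"
  shows "u1 = u2 \<and> u1' = u2'"
proof -
  obtain x where "x \<in> {u1<..<u1'}" "x \<in> {u2<..<u2'}" using assms(3) by blast
  then have "u1 < x" "x < u1'" "u2 < x" "x < u2'" by auto
  with assms(1,2) show ?thesis
    unfolding is_gap_def by (metis linorder_neqE_linordered_idom order.strict_trans)
qed

lemma raw_children_norm_overlap_eq: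
  assumes "((u1, u1'), w1) \<in> raw_children_norm v" "((u2, u2'), w2) \<in> raw_children_norm v"
    and "{u1<..<u1'} \<inter> {u2<..<u2'} \<noteq> {}"
  shows "u1 = u2 \<and> u1' = u2' \<and> w1 = w2"
proof -
  have "is_gap v u1 u1'" "w1 = gap_nbrs v u1 u1'" "is_gap v u2 u2'" "w2 = gap_nbrs v u2 u2'"
    using assms(1,2) unfolding raw_children_norm_def by auto
  with gap_overlap_eq[OF _ _ assms(3)] show ?thesis by blast
qed

lemma children_norm_overlap_eq:
  assumes "((u1, u1'), w1) \<in> children_norm v" "((u2, u2'), w2) \<in> children_norm v"
    and "{u1<..<u1'} \<inter> {u2<..<u2'} \<noteq> {}"
  shows "u1 = u2 \<and> u1' = u2' \<and> w1 = w2"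
proof -
  obtain x1 where x1: "((u1, u1'), w1) \<in> raw_children_norm x1" "norm_same\<^sup>*\<^sup>* v x1" "norm_stops x1"
    using assms(1) unfolding children_norm_def by blast
  obtain x2 where x2: "((u2, u2'), w2) \<in> raw_children_norm x2" "norm_same\<^sup>*\<^sup>* v x2" "norm_stops x2"
    using assms(2) unfolding children_norm_def by blast
  have "x1 = x2" using norm_stops_unique x1(2,3) x2(2,3) by blast
  with x1(1) x2(1) show ?thesis using raw_children_norm_overlap_eq assms(3) by blast
qed

text \<open>A child interval is never the whole parent: that would be a single same-interval child,
  which the convention has already replaced.\<close>

lemma children_norm_proper: "((u, u'), w) \<in> children_norm v \<Longrightarrow> (u, u') \<noteq> (0, 1)"
proof
  assume c: "((u, u'), w) \<in> children_norm v" and uu': "(u, u') = (0, 1)"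
  then obtain x where x: "((u, u'), w) \<in> raw_children_norm x" "norm_stops x"
    unfolding children_norm_def by blast
  have "c = ((u, u'), w)" if "c \<in> raw_children_norm x" for c
  proof -
    obtain a a' w' where c_def: "c = ((a, a'), w')" by (metis prod.collapse)
    have "0 \<le> a" "a < a'" "a' \<le> 1"
      using that cut_points_subset unfolding c_def raw_children_norm_def is_gap_def by fastforce+
    then have "(a + a') / 2 \<in> {a<..<a'} \<inter> {u<..<u'}" using uu' by auto
    then show ?thesis using raw_children_norm_overlap_eq[OF that[unfolded c_def] x(1)] c_def by blast
  qed
  then have "norm_same x w" using x(1) uu' unfolding norm_same_def by blast
  with x(2) show False unfolding norm_stops_def by blast
qed

subsection \<open>Rooted paths of the transition graph\<close>

abbreviation E where "E \<equiv> tg_edges r d K \<Phi>"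
abbreviation V where "V \<equiv> tg_vertices r d K \<Phi>"
abbreviation rooted where "rooted \<equiv> rooted_path r d K \<Phi>"

definition path_end :: "edge list \<Rightarrow> aff set" where
  "path_end es = (if es = [] then {aid} else snd (snd (last es)))"

lemma rooted_Nil: "rooted []"
  by (simp add: rooted_path_def)

lemma rooted_snoc_iff: "rooted (es @ [e]) \<longleftrightarrow> rooted es \<and> e \<in> E \<and> fst e = path_end es"
proof -
  have links: "(\<forall>k. Suc k < length (es @ [e]) \<longrightarrow> snd (snd ((es @ [e]) ! k)) = fst ((es @ [e]) ! Suc k)) \<longleftrightarrow>
      (\<forall>k. Suc k < length es \<longrightarrow> snd (snd (es ! k)) = fst (es ! Suc k)) \<and>
      (es \<noteq> [] \<longrightarrow> snd (snd (last es)) = fst e)" (is "?L \<longleftrightarrow> ?R")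
  proof
    assume L: ?L
    have "snd (snd (es ! k)) = fst (es ! Suc k)" if "Suc k < length es" for k
      using L[rule_format, of k] that by (simp add: nth_append)
    moreover have "snd (snd (last es)) = fst e" if "es \<noteq> []"
      using L[rule_format, of "length es - 1"] that by (simp add: nth_append last_conv_nth)
    ultimately show ?R by blast
  next
    assume R: ?R
    show ?L
    proof (intro allI impI)
      fix k assume k: "Suc k < length (es @ [e])"
      show "snd (snd ((es @ [e]) ! k)) = fst ((es @ [e]) ! Suc k)"
      proof (cases "Suc k < length es")
        case False
        then have len: "length es = Suc k" using k by simp
        then have "es \<noteq> []" by auto
        with len have "last es = es ! k" by (simp add: last_conv_nth)
        with \<open>es \<noteq> []\<close> show ?thesis using R len by (simp add: nth_append)
      qed (use R in \<open>simp add: nth_append\<close>)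
    qed
  qed
  show ?thesis
    unfolding rooted_path_def links path_end_def by (cases "es = []") auto
qed

lemma rooted_appendD: "rooted (xs @ ys) \<Longrightarrow> rooted xs"
proof (induction ys rule: rev_induct)
  case (snoc y ys)
  then show ?case using rooted_snoc_iff[of "xs @ ys" y] by simp
qed simp

lemma rooted_set_edges: "rooted es \<Longrightarrow> set es \<subseteq> E"
  by (simp add: rooted_path_def)

lemma path_interval_Nil [simp]: "path_interval [] = (0, 1)"
  by (simp add: path_interval_def)

lemma path_interval_snoc: "path_interval (es @ [e]) =
   (app (Tint (path_interval es)) (fst (fst (snd e))), app (Tint (path_interval es)) (snd (fst (snd e))))"
  by (simp add: path_interval_def app_Tint)

lemma path_weight_Nil [simp]: "path_weight [] = 1"
  and path_weight_append: "path_weight (xs @ ys) = path_weight xs * path_weight ys"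
  by (simp_all add: path_weight_def)

lemma tg_edge_children_norm:
  assumes "e \<in> E"
  obtains v u u' v' where "e = (v, (u, u'), v')" "((u, u'), v') \<in> children_norm v" "v \<in> V"
proof -
  obtain v v' \<Delta> \<Delta>' n where e: "e = (v, relpos \<Delta> \<Delta>', v')" "(\<Delta>, v) \<in> netN r d K \<Phi> n"
    "(\<Delta>', v') \<in> children r d K \<Phi> (\<Delta>, v)"
    using assms unfolding tg_edges_def by blast
  have inv: "net_inv (\<Delta>, v)" using net_inv_netN e(2) by blast
  then obtain c where c: "c \<in> children_norm v" "(\<Delta>', v') = rescale \<Delta> c"
    using e(3) unfolding children_eq_rescale[OF inv] by blast
  obtain u u' w where c_def: "c = ((u, u'), w)" by (metis prod.collapse)
  with c(2) have "\<Delta>' = (app (Tint \<Delta>) u, app (Tint \<Delta>) u')" "w = v'"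
    by (simp_all add: rescale_def)
  then have "e = (v, (u, u'), v')" using e(1) relpos_app_Tint[OF net_invD(1)[OF inv]] by simp
  moreover have "((u, u'), v') \<in> children_norm v" using c(1) c_def \<open>w = v'\<close> by simp
  moreover have "v \<in> V" using e(2) unfolding tg_vertices_def by blast
  ultimately show ?thesis by (rule that)
qed

lemma tg_edge_bounds:
  assumes "e \<in> E"
  shows "0 \<le> fst (fst (snd e))" "fst (fst (snd e)) < snd (fst (snd e))" "snd (fst (snd e)) \<le> 1"
    and edge_weight_pos: "0 < edge_weight e" and edge_weight_less_1: "edge_weight e < 1"
proof -
  obtain v u u' v' where e: "e = (v, (u, u'), v')" "((u, u'), v') \<in> children_norm v" "v \<in> V"
    by (rule tg_edge_children_norm[OF assms])
  have "0 \<le> u" "u < u'" "u' \<le> 1" "(u, u') \<noteq> (0, 1)"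
    using children_norm_in_01[OF e(2)] children_norm_proper[OF e(2)] by auto
  have "u' - u < 1"
  proof (rule ccontr)
    assume "\<not> u' - u < 1"
    then have "u = 0" "u' = 1" using \<open>0 \<le> u\<close> \<open>u' \<le> 1\<close> by linarith+
    with \<open>(u, u') \<noteq> (0, 1)\<close> show False by simp
  qed
  with \<open>0 \<le> u\<close> \<open>u < u'\<close> \<open>u' \<le> 1\<close> show "0 \<le> fst (fst (snd e))" "fst (fst (snd e)) < snd (fst (snd e))"
    "snd (fst (snd e)) \<le> 1" "0 < edge_weight e" "edge_weight e < 1"
    unfolding e(1) edge_weight_def by simp_all
qed

lemma netN_rooted_path: "rooted es \<Longrightarrow> (path_interval es, path_end es) \<in> netN r d K \<Phi> (length es)"
proof (induction es rule: rev_induct)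
  case (snoc e es)
  then have es: "rooted es" "e \<in> E" "fst e = path_end es"
    unfolding rooted_snoc_iff by auto
  let ?\<Delta> = "path_interval es"
  have IH: "(?\<Delta>, path_end es) \<in> netN r d K \<Phi> (length es)" using snoc.IH es(1) by blast
  obtain v u u' v' where e: "e = (v, (u, u'), v')" "((u, u'), v') \<in> children_norm v" "v \<in> V"
    by (rule tg_edge_children_norm[OF es(2)])
  have v: "v = path_end es" using e(1) es(3) by simp
  have "rescale ?\<Delta> ((u, u'), v') \<in> rescale ?\<Delta> ` children_norm v" using e(2) by (rule imageI)
  then have "rescale ?\<Delta> ((u, u'), v') \<in> children r d K \<Phi> (?\<Delta>, path_end es)"
    unfolding children_eq_rescale[OF net_inv_netN[OF IH]] v .
  moreover have "rescale ?\<Delta> ((u, u'), v') = (path_interval (es @ [e]), path_end (es @ [e]))"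
    unfolding e(1) path_interval_snoc by (simp add: rescale_def path_end_def)
  ultimately have "(path_interval (es @ [e]), path_end (es @ [e])) \<in> children r d K \<Phi> (?\<Delta>, path_end es)"
    by simp
  with IH show ?case unfolding length_append_singleton netN.simps by blast
qed (simp add: path_end_def root_pair_def)

lemma rooted_path_netN:
  "x \<in> netN r d K \<Phi> n \<Longrightarrow> \<exists>es. rooted es \<and> length es = n \<and> path_interval es = fst x \<and> path_end es = snd x"
proof (induction n arbitrary: x)
  case 0
  then show ?case using rooted_Nil by (intro exI[of _ "[]"]) (simp add: path_end_def root_pair_def)
next
  case (Suc n)
  then obtain \<Delta> v where y: "(\<Delta>, v) \<in> netN r d K \<Phi> n" "x \<in> children r d K \<Phi> (\<Delta>, v)" by auto
  obtain es where es: "rooted es" "length es = n" "path_interval es = \<Delta>" "path_end es = v"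
    using Suc.IH[OF y(1)] by auto
  have inv: "net_inv (\<Delta>, v)" using net_inv_netN y(1) by blast
  then obtain ch where ch: "ch \<in> children_norm v" "x = rescale \<Delta> ch"
    using y(2) unfolding children_eq_rescale[OF inv] by blast
  obtain u u' v' where "ch = ((u, u'), v')" by (metis prod.collapse)
  with ch have c: "((u, u'), v') \<in> children_norm v" "x = ((app (Tint \<Delta>) u, app (Tint \<Delta>) u'), v')"
    by (simp_all add: rescale_def)
  let ?e = "(v, (u, u'), v')"
  have "(v, relpos \<Delta> (app (Tint \<Delta>) u, app (Tint \<Delta>) u'), v') \<in> E"
    unfolding tg_edges_def using y(1) y(2)[unfolded c(2)] by blast
  then have "?e \<in> E" unfolding relpos_app_Tint[OF net_invD(1)[OF inv]] .
  then have "rooted (es @ [?e])" using es rooted_snoc_iff by simp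
  moreover have "path_interval (es @ [?e]) = fst x" "path_end (es @ [?e]) = snd x"
    using es(3) c(2) unfolding path_interval_snoc path_end_def by simp_all
  ultimately show ?case using es(2) by (intro exI[of _ "es @ [?e]"]) simp
qed

lemma path_interval_diam: "snd (path_interval es) - fst (path_interval es) = path_weight es"
proof (induction es rule: rev_induct)
  case (snoc e es)
  then show ?case
    unfolding path_interval_snoc path_weight_append
    by (simp add: app_Tint edge_weight_def path_weight_def algebra_simps)
qed simp

lemma path_weight_pos: "set es \<subseteq> E \<Longrightarrow> 0 < path_weight es"
  unfolding path_weight_def by (induction es) (auto intro!: mult_pos_pos edge_weight_pos)

lemma path_weight_le_1: "set es \<subseteq> E \<Longrightarrow> path_weight es \<le> 1"
  unfolding path_weight_def
proof (induction es)
  case (Cons e es)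
  then show ?case
    using edge_weight_pos[of e] edge_weight_less_1[of e] path_weight_pos[of es]
    by (auto simp: path_weight_def intro!: mult_le_one)
qed simp

lemma path_interval_append_subset:
  assumes "set ys \<subseteq> E" "fst (path_interval xs) < snd (path_interval xs)"
  shows "fst (path_interval xs) \<le> fst (path_interval (xs @ ys)) \<and>
         fst (path_interval (xs @ ys)) < snd (path_interval (xs @ ys)) \<and>
         snd (path_interval (xs @ ys)) \<le> snd (path_interval xs)"
  using assms(1)
proof (induction ys rule: rev_induct)
  case (snoc y ys)
  define a where "a = fst (path_interval (xs @ ys))"
  define b where "b = snd (path_interval (xs @ ys))"
  have IH: "fst (path_interval xs) \<le> a" "a < b" "b \<le> snd (path_interval xs)"
    using snoc by (auto simp: a_def b_def)
  have y: "0 \<le> fst (fst (snd y))" "fst (fst (snd y)) < snd (fst (snd y))" "snd (fst (snd y)) \<le> 1"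
    using tg_edge_bounds[of y] snoc.prems by auto
  have "(b - a) * snd (fst (snd y)) \<le> b - a" using mult_left_mono[OF y(3), of "b - a"] IH(2) by simp
  moreover have "(b - a) * fst (fst (snd y)) < (b - a) * snd (fst (snd y))"
    using y(2) IH(2) by (intro mult_strict_left_mono) auto
  moreover have "0 \<le> (b - a) * fst (fst (snd y))" using y(1) IH(2) by simp
  moreover have "path_interval (xs @ ys @ [y]) =
      (a + (b - a) * fst (fst (snd y)), a + (b - a) * snd (fst (snd y)))"
    using path_interval_snoc[of "xs @ ys" y] unfolding a_def b_def by (simp add: app_Tint)
  then have "fst (path_interval (xs @ ys @ [y])) = a + (b - a) * fst (fst (snd y))"
    "snd (path_interval (xs @ ys @ [y])) = a + (b - a) * snd (fst (snd y))"
    by simp_all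
  ultimately show ?case using IH by linarith
qed (use assms(2) in simp)

lemma path_interval_nondegenerate: "rooted es \<Longrightarrow> fst (path_interval es) < snd (path_interval es)"
  using path_interval_diam[of es] path_weight_pos[of es] rooted_set_edges by fastforce

text \<open>Paths that branch at a common prefix end in net intervals with disjoint interiors, because
  distinct children of one net interval overlap at most in endpoints.\<close>

lemma parallel_path_intervals_disjoint:
  assumes "rooted es1" "rooted es2" "es1 \<parallel> es2"
  shows "{fst (path_interval es1)<..<snd (path_interval es1)} \<inter>
         {fst (path_interval es2)<..<snd (path_interval es2)} = {}"
proof -
  obtain as b bs c cs where split: "b \<noteq> c" "es1 = as @ b # bs" "es2 = as @ c # cs"
    using parallel_decomp[OF assms(3)] by blast
  have rooted_b: "rooted (as @ [b])" and rooted_c: "rooted (as @ [c])"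
    using assms(1,2) split rooted_appendD[of "as @ [b]" bs] rooted_appendD[of "as @ [c]" cs] by simp_all
  then have "b \<in> E" "c \<in> E" and same_source: "fst b = fst c"
    using rooted_snoc_iff by auto
  obtain v u1 u1' w1 where b: "b = (v, (u1, u1'), w1)" "((u1, u1'), w1) \<in> children_norm v" "v \<in> V"
    by (rule tg_edge_children_norm[OF \<open>b \<in> E\<close>])
  obtain v2 u2 u2' w2 where c: "c = (v2, (u2, u2'), w2)" "((u2, u2'), w2) \<in> children_norm v2" "v2 \<in> V"
    by (rule tg_edge_children_norm[OF \<open>c \<in> E\<close>])
  have "v2 = v" using same_source b(1) c(1) by simp
  then have disjoint: "{u1<..<u1'} \<inter> {u2<..<u2'} = {}"
    using children_norm_overlap_eq[OF b(2)] c split(1) b(1) by auto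
  let ?\<Delta> = "path_interval as"
  have \<Delta>: "fst ?\<Delta> < snd ?\<Delta>"
    using path_interval_nondegenerate rooted_appendD rooted_b by blast
  have "set bs \<subseteq> E" "set cs \<subseteq> E"
    using rooted_set_edges[OF assms(1)] rooted_set_edges[OF assms(2)] split by auto
  then have "{fst (path_interval es1)<..<snd (path_interval es1)} \<subseteq> {fst (path_interval (as @ [b]))<..<snd (path_interval (as @ [b]))}"
    "{fst (path_interval es2)<..<snd (path_interval es2)} \<subseteq> {fst (path_interval (as @ [c]))<..<snd (path_interval (as @ [c]))}"
    using path_interval_append_subset[OF _ path_interval_nondegenerate[OF rooted_b], of bs]
      path_interval_append_subset[OF _ path_interval_nondegenerate[OF rooted_c], of cs] split
    by auto
  moreover have "{fst (path_interval (as @ [b]))<..<snd (path_interval (as @ [b]))} \<inter>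
      {fst (path_interval (as @ [c]))<..<snd (path_interval (as @ [c]))} = {}"
    unfolding path_interval_snoc b(1) c(1) fst_conv snd_conv greaterThanLessThan_app_Tint[OF \<Delta>]
      image_Int[OF inj_app_Tint[OF \<Delta>], symmetric] disjoint by simp
  ultimately show ?thesis by blast
qed

end

locale finite_type = net_intervals I r d K \<Phi>
  for I :: "'i set" and r d :: "'i \<Rightarrow> real" and K :: "real set" and \<Phi> :: "'i itrule" +
  assumes fnc: "FNC r d K \<Phi>"
begin

lemma finite_E: "finite E" and finite_V: "finite V"
  using fnc unfolding FNC_def by blast+

lemma root_in_V: "{aid} \<in> V"
  unfolding tg_vertices_def by (rule CollectI, rule exI[of _ 0]) (auto simp: root_pair_def)

definition wmin :: real where "wmin = Min (insert 1 (edge_weight ` E))"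
definition wmax :: real where "wmax = Max (insert (1/2) (edge_weight ` E))"

lemma wmin_pos: "0 < wmin"
  and wmin_le_1: "wmin \<le> 1"
  and wmin_le_edge_weight: "e \<in> E \<Longrightarrow> wmin \<le> edge_weight e"
  unfolding wmin_def using finite_E edge_weight_pos by (auto simp: Min_gr_iff)

lemma wmax_pos: "0 < wmax"
  and wmax_less_1: "wmax < 1"
  and edge_weight_le_wmax: "e \<in> E \<Longrightarrow> edge_weight e \<le> wmax"
  unfolding wmax_def using finite_E edge_weight_less_1 by (auto simp: Max_gr_iff Max_less_iff)

lemma path_weight_le_wmax_power: "set es \<subseteq> E \<Longrightarrow> path_weight es \<le> wmax ^ length es"
  unfolding path_weight_def
proof (induction es)
  case (Cons e es)
  then show ?case
    using edge_weight_le_wmax[of e] edge_weight_pos[of e] path_weight_pos[of es]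
    by (auto simp: path_weight_def intro!: mult_mono)
qed simp

abbreviation F where "F \<equiv> Fset r d K \<Phi>"

lemma FsetD:
  assumes "es \<in> F t"
  shows "rooted es" "es \<noteq> []" "path_weight es \<le> t" "t < path_weight (butlast es)"
    "wmin * t < path_weight es" "snd (path_interval es) - fst (path_interval es) = path_weight es"
    "fst (path_interval es) < snd (path_interval es)"
proof -
  show R: "rooted es" "es \<noteq> []" "path_weight es \<le> t" "t < path_weight (butlast es)"
    using assms unfolding Fset_def by auto
  show "snd (path_interval es) - fst (path_interval es) = path_weight es" by (rule path_interval_diam)
  show "fst (path_interval es) < snd (path_interval es)" by (rule path_interval_nondegenerate[OF R(1)])
  have last: "last es \<in> E" and "set (butlast es) \<subseteq> E"
    using R(1,2) rooted_set_edges[of es] by (auto dest: in_set_butlastD)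
  have "path_weight es = path_weight (butlast es) * edge_weight (last es)"
    using path_weight_append[of "butlast es" "[last es]"] R(2) by (simp add: path_weight_def)
  moreover have "t * wmin \<le> t * edge_weight (last es)"
    using wmin_le_edge_weight[OF last] R(3) path_weight_pos[OF rooted_set_edges[OF R(1)]]
    by (intro mult_left_mono) auto
  moreover have "t * edge_weight (last es) < path_weight (butlast es) * edge_weight (last es)"
    using R(4) edge_weight_pos[OF last] by (intro mult_strict_right_mono)
  ultimately show "wmin * t < path_weight es" by (simp add: mult.commute)
qed

lemma finite_Fset:
  assumes "0 < t"
  shows "finite (F t)"
proof -
  obtain L where L: "wmax ^ L < t" using real_arch_pow_inv[OF assms wmax_less_1] by blast
  have "F t \<subseteq> {xs. set xs \<subseteq> E \<and> length xs \<le> L}"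
  proof
    fix es assume es: "es \<in> F t"
    have edges: "set es \<subseteq> E" using rooted_set_edges[OF FsetD(1)[OF es]] .
    then have "set (butlast es) \<subseteq> E" by (auto dest: in_set_butlastD)
    then have "t < wmax ^ length (butlast es)"
      using FsetD(4)[OF es] path_weight_le_wmax_power by (meson less_le_trans)
    have "\<not> L \<le> length (butlast es)"
    proof
      assume "L \<le> length (butlast es)"
      then have "wmax ^ length (butlast es) \<le> wmax ^ L"
        using power_decreasing wmax_pos wmax_less_1 by auto
      with L \<open>t < wmax ^ length (butlast es)\<close> show False by linarith
    qed
    then show "es \<in> {xs. set xs \<subseteq> E \<and> length xs \<le> L}" using edges by auto
  qed
  then show ?thesis using finite_lists_length_le[OF finite_E] finite_subset by blast
qed

lemma Fset_prefix_eq: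
  assumes "es1 \<in> F t" "es2 \<in> F t" "prefix es1 es2"
  shows "es1 = es2"
proof (rule ccontr)
  assume "es1 \<noteq> es2"
  with assms(3) obtain zs where zs: "es2 = es1 @ zs" "zs \<noteq> []" by (auto simp: prefix_def)
  then have "path_weight (butlast es2) = path_weight es1 * path_weight (butlast zs)"
    by (simp add: butlast_append path_weight_append)
  also have "\<dots> \<le> path_weight es1"
  proof -
    have "set (butlast zs) \<subseteq> E" "set es1 \<subseteq> E"
      using rooted_set_edges[OF FsetD(1)[OF assms(2)]] zs by (auto dest: in_set_butlastD)
    then show ?thesis
      using path_weight_le_1 path_weight_pos by (simp add: mult_left_le)
  qed
  finally have "path_weight (butlast es2) \<le> path_weight es1" .
  then show False using FsetD(3)[OF assms(1)] FsetD(4)[OF assms(2)] by linarith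
qed

lemma Fset_intervals_disjoint:
  assumes "es1 \<in> F t" "es2 \<in> F t" "es1 \<noteq> es2"
  shows "{fst (path_interval es1)<..<snd (path_interval es1)} \<inter>
         {fst (path_interval es2)<..<snd (path_interval es2)} = {}"
proof -
  have "es1 \<parallel> es2"
    using Fset_prefix_eq[OF assms(1,2)] Fset_prefix_eq[OF assms(2,1)] assms(3) by (auto simp: parallel_def)
  then show ?thesis
    by (rule parallel_path_intervals_disjoint[OF FsetD(1)[OF assms(1)] FsetD(1)[OF assms(2)]])
qed

text \<open>A point of \<open>K\<close> inside one net interval with neighbour set \<open>v\<close> gives, at the same relative
  position, a point of \<open>K\<close> inside every net interval with neighbour set \<open>v\<close>.\<close>

lemma vertex_relative_point:
  assumes "v \<in> V"
  shows "\<exists>y. 0 < y \<and> y < 1 \<and> (\<forall>\<Delta>. net_inv (\<Delta>, v) \<longrightarrow> app (Tint \<Delta>) y \<in> K)"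
proof -
  obtain n \<Delta>0 where "(\<Delta>0, v) \<in> netN r d K \<Phi> n" using assms unfolding tg_vertices_def by blast
  then have inv: "net_inv (\<Delta>0, v)" using net_inv_netN by blast
  obtain x where x: "x \<in> K \<inter> {fst \<Delta>0<..<snd \<Delta>0}" using net_invD(5)[OF inv] by blast
  then obtain f k where fk: "f \<in> v" "k \<in> K" "x = app (acomp (Tint \<Delta>0) f) k"
    using net_invD(4)[OF inv] by blast
  have "0 < app f k" "app f k < 1"
    using x fk app_Tint_less_iff[OF net_invD(1)[OF inv], of 0 "app f k"]
      app_Tint_less_iff[OF net_invD(1)[OF inv], of "app f k" 1] by auto
  moreover have "app (Tint \<Delta>) (app f k) \<in> K" if inv_\<Delta>: "net_inv (\<Delta>, v)" for \<Delta>
  proof -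
    obtain \<sigma> where \<sigma>: "\<sigma> \<in> lists I" "acomp (Tint \<Delta>) f = S \<sigma>"
      using net_invD(3)[OF inv_\<Delta> fk(1)] by blast
    then have "app (Tint \<Delta>) (app f k) = app (S \<sigma>) k" by (metis app_acomp)
    with Sw_image_K_subset[OF \<sigma>(1)] fk(2) show ?thesis by blast
  qed
  ultimately show ?thesis by blast
qed

definition vertex_point :: "aff set \<Rightarrow> real" where
  "vertex_point v = (SOME y. 0 < y \<and> y < 1 \<and> (\<forall>\<Delta>. net_inv (\<Delta>, v) \<longrightarrow> app (Tint \<Delta>) y \<in> K))"

lemma vertex_point:
  assumes "v \<in> V"
  shows "0 < vertex_point v" "vertex_point v < 1" "net_inv (\<Delta>, v) \<Longrightarrow> app (Tint \<Delta>) (vertex_point v) \<in> K"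
  using someI_ex[OF vertex_relative_point[OF assms]] unfolding vertex_point_def by blast+

definition margin :: real where
  "margin = Min ((\<lambda>v. min (vertex_point v) (1 - vertex_point v)) ` V)"

lemma margin_pos: "0 < margin"
  unfolding margin_def using finite_V root_in_V vertex_point by (subst Min_gr_iff) auto

lemma margin_le: "v \<in> V \<Longrightarrow> margin \<le> vertex_point v \<and> margin \<le> 1 - vertex_point v"
proof -
  assume "v \<in> V"
  then have "margin \<le> min (vertex_point v) (1 - vertex_point v)"
    unfolding margin_def using finite_V by (intro Min_le) auto
  then show ?thesis by simp
qed

lemma margin_le_half: "margin \<le> 1 / 2"
  using margin_le[OF root_in_V] by linarith

definition margin_point :: "edge list \<Rightarrow> real" where
  "margin_point es = app (Tint (path_interval es)) (vertex_point (path_end es))"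

lemma margin_point:
  assumes "rooted es"
  shows "margin_point es \<in> K"
    "fst (path_interval es) + margin * path_weight es \<le> margin_point es"
    "margin_point es + margin * path_weight es \<le> snd (path_interval es)"
proof -
  let ?\<Delta> = "path_interval es"
  have "(?\<Delta>, path_end es) \<in> netN r d K \<Phi> (length es)" using netN_rooted_path[OF assms] .
  then have V: "path_end es \<in> V" and inv: "net_inv (?\<Delta>, path_end es)"
    unfolding tg_vertices_def using net_inv_netN by blast+
  show "margin_point es \<in> K" unfolding margin_point_def using vertex_point(3)[OF V inv] .
  have w: "path_weight es = snd ?\<Delta> - fst ?\<Delta>" using path_interval_diam by simp
  have "margin * path_weight es \<le> vertex_point (path_end es) * path_weight es"
    "margin * path_weight es \<le> (1 - vertex_point (path_end es)) * path_weight es"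
    using margin_le[OF V] path_weight_pos rooted_set_edges[OF assms] by (auto intro: mult_right_mono)
  then show "fst ?\<Delta> + margin * path_weight es \<le> margin_point es"
    "margin_point es + margin * path_weight es \<le> snd ?\<Delta>"
    unfolding margin_point_def app_Tint w by (simp_all add: algebra_simps)
qed

lemma margin_point_interior:
  assumes "rooted es"
  shows "fst (path_interval es) < margin_point es" "margin_point es < snd (path_interval es)"
proof -
  have "0 < margin * path_weight es"
    using margin_pos path_weight_pos[OF rooted_set_edges[OF assms]] by simp
  then show "fst (path_interval es) < margin_point es" "margin_point es < snd (path_interval es)"
    using margin_point[OF assms] by linarith+
qed

subsection \<open>The intervals of \<open>F(t)\<close> cover \<open>K\<close>\<close>

definition stop_nbrs :: "npair \<Rightarrow> aff set" where
  "stop_nbrs x = (SOME w. norm_same\<^sup>*\<^sup>* (snd x) w \<and> norm_stops w)"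

lemma stop_nbrs:
  assumes "(\<Delta>, v) \<in> netN r d K \<Phi> n"
  shows "norm_same\<^sup>*\<^sup>* v (stop_nbrs (\<Delta>, v))" "norm_stops (stop_nbrs (\<Delta>, v))"
    "children_norm v = raw_children_norm (stop_nbrs (\<Delta>, v))" "net_inv (\<Delta>, stop_nbrs (\<Delta>, v))"
proof -
  show w: "norm_same\<^sup>*\<^sup>* v (stop_nbrs (\<Delta>, v))" "norm_stops (stop_nbrs (\<Delta>, v))"
    using someI_ex[OF norm_stops_exists[OF assms]] unfolding stop_nbrs_def by auto
  show "children_norm v = raw_children_norm (stop_nbrs (\<Delta>, v))" using children_norm_eq[OF w] .
  show "net_inv (\<Delta>, stop_nbrs (\<Delta>, v))" using net_inv_norm_same[OF net_inv_netN[OF assms] w(1)] .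
qed

lemma finite_netN: "finite (netN r d K \<Phi> n)"
proof (induction n)
  case (Suc n)
  have "finite (children r d K \<Phi> x)" if x: "x \<in> netN r d K \<Phi> n" for x
  proof -
    obtain \<Delta> v where x_def: "x = (\<Delta>, v)" by fastforce
    then have "children r d K \<Phi> x = rescale \<Delta> ` raw_children_norm (stop_nbrs (\<Delta>, v))"
      using children_eq_rescale[OF net_inv_netN[OF x[unfolded x_def]]] stop_nbrs(3) x by simp
    then show ?thesis using finite_raw_children_norm[OF stop_nbrs(4)] x x_def by simp
  qed
  then show ?case using Suc by simp
qed simp

text \<open>Apart from the finitely many cut points, every point of \<open>K\<close> inside a net interval of level
  \<open>n\<close> lies inside a net interval of level \<open>n + 1\<close>; hence only finitely many points of \<open>K\<close> avoid the
  interiors of the level-\<open>n\<close> net intervals.\<close>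

lemma interior_point_in_child:
  assumes x: "(\<Delta>, v) \<in> netN r d K \<Phi> n" and y: "y \<in> K" "fst \<Delta> < y" "y < snd \<Delta>"
    and not_cut: "y \<notin> app (Tint \<Delta>) ` cut_points (stop_nbrs (\<Delta>, v))"
  shows "\<exists>x'\<in>netN r d K \<Phi> (Suc n). y \<in> {fst (fst x')<..<snd (fst x')}"
proof -
  let ?w = "stop_nbrs (\<Delta>, v)" and ?h = "app (Tint \<Delta>)"
  have inv: "net_inv (\<Delta>, v)" and invw: "net_inv (\<Delta>, ?w)"
    using net_inv_netN[OF x] stop_nbrs(4)[OF x] by auto
  have \<Delta>: "fst \<Delta> < snd \<Delta>" using net_invD(1)[OF inv] .
  obtain z where yz: "y = ?h z" using app_Tint_surj[OF \<Delta>] by blast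
  then have z: "z \<notin> cut_points ?w" "0 < z" "z < 1"
    using not_cut y(2,3) app_Tint_less_iff[OF \<Delta>, of 0 z] app_Tint_less_iff[OF \<Delta>, of z 1] by auto
  define L where "L = {q \<in> cut_points ?w. q < z}"
  define R where "R = {q \<in> cut_points ?w. z < q}"
  have L: "finite L" "0 \<in> L" and R: "finite R" "1 \<in> R"
    unfolding L_def R_def using finite_cut_points[OF invw] z by (auto simp: cut_points_def)
  define u where "u = Max L"
  define u' where "u' = Min R"
  have "u \<in> L" "u' \<in> R" unfolding u_def u'_def using L R by (auto intro: Max_in Min_in)
  then have u: "u < z" "z < u'" "u \<in> cut_points ?w" "u' \<in> cut_points ?w"
    unfolding L_def R_def by auto
  have between: "\<not> (u < q \<and> q < u')" if "q \<in> cut_points ?w" for q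
  proof
    assume q: "u < q \<and> q < u'"
    consider "q < z" | "q = z" | "z < q" by linarith
    then show False
    proof cases
      case 1
      then have "q \<le> u" unfolding u_def using L that by (intro Max_ge) (auto simp: L_def)
      with q show False by simp
    next
      case 3
      then have "u' \<le> q" unfolding u'_def using R that by (intro Min_le) (auto simp: R_def)
      with q show False by simp
    qed (use that z(1) in simp)
  qed
  have y_in: "y \<in> {?h u<..<?h u'}" using yz u(1,2) app_Tint_less_iff[OF \<Delta>] by auto
  have "0 \<le> u" "u' \<le> 1" using u(3,4) cut_points_subset[of ?w] by auto
  then have "\<exists>g\<in>Y_norm ?w. app g ` K \<inter> {u<..<u'} \<noteq> {}"
    using K_meets_gap_iff[OF invw] y_in y(1) by blast
  then have "is_gap ?w u u'" unfolding is_gap_def using u between by auto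
  then have "((u, u'), gap_nbrs ?w u u') \<in> children_norm v"
    unfolding stop_nbrs(3)[OF x] raw_children_norm_def by blast
  then have "rescale \<Delta> ((u, u'), gap_nbrs ?w u u') \<in> children r d K \<Phi> (\<Delta>, v)"
    unfolding children_eq_rescale[OF inv] by (rule imageI)
  then have "((?h u, ?h u'), gap_nbrs ?w u u') \<in> netN r d K \<Phi> (Suc n)"
    using x by (auto simp: rescale_def)
  with y_in show ?thesis by (intro bexI[of _ "((?h u, ?h u'), gap_nbrs ?w u u')"]) auto
qed

lemma finite_K_minus_net_interiors:
  "finite (K - (\<Union>x\<in>netN r d K \<Phi> n. {fst (fst x)<..<snd (fst x)}))"
proof (induction n)
  case 0
  have "K - (\<Union>x\<in>netN r d K \<Phi> 0. {fst (fst x)<..<snd (fst x)}) \<subseteq> {0, 1}"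
    using K_subset_01 by (auto simp: root_pair_def)
  then show ?case by (rule finite_subset) simp
next
  case (Suc n)
  let ?cuts = "\<Union>x\<in>netN r d K \<Phi> n. app (Tint (fst x)) ` cut_points (stop_nbrs x)"
  have "finite ?cuts"
  proof (rule finite_UN_I[OF finite_netN])
    fix x assume "x \<in> netN r d K \<Phi> n"
    then show "finite (app (Tint (fst x)) ` cut_points (stop_nbrs x))"
      using finite_cut_points stop_nbrs(4)[of "fst x" "snd x" n] by simp
  qed
  moreover have "K - (\<Union>x\<in>netN r d K \<Phi> (Suc n). {fst (fst x)<..<snd (fst x)}) \<subseteq>
      (K - (\<Union>x\<in>netN r d K \<Phi> n. {fst (fst x)<..<snd (fst x)})) \<union> ?cuts"
  proof
    fix y assume y: "y \<in> K - (\<Union>x\<in>netN r d K \<Phi> (Suc n). {fst (fst x)<..<snd (fst x)})"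
    show "y \<in> (K - (\<Union>x\<in>netN r d K \<Phi> n. {fst (fst x)<..<snd (fst x)})) \<union> ?cuts"
    proof (rule ccontr)
      assume "\<not> ?thesis"
      with y obtain x where "x \<in> netN r d K \<Phi> n" "fst (fst x) < y" "y < snd (fst x)"
          "y \<notin> app (Tint (fst x)) ` cut_points (stop_nbrs x)"
        by auto
      then show False using interior_point_in_child[of "fst x" "snd x" n y] y by auto
    qed
  qed
  ultimately show ?case using Suc finite_subset by blast
qed

lemma K_subset_net_intervals: "y \<in> K \<Longrightarrow> \<exists>x\<in>netN r d K \<Phi> n. y \<in> {fst (fst x)..snd (fst x)}"
proof -
  assume "y \<in> K"
  let ?U = "\<Union>x\<in>netN r d K \<Phi> n. {fst (fst x)<..<snd (fst x)}"
  let ?C = "\<Union>x\<in>netN r d K \<Phi> n. {fst (fst x)..snd (fst x)}"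
  have "y islimpt ((K - ?U) \<union> (K \<inter> ?U))" using K_islimpt[OF \<open>y \<in> K\<close>] by (simp add: Un_Diff_Int)
  then have "y islimpt (K \<inter> ?U)" using islimpt_Un_finite[OF finite_K_minus_net_interiors] by blast
  moreover have "K \<inter> ?U \<subseteq> ?C" by auto
  ultimately have "y islimpt ?C" by (rule islimpt_subset)
  moreover have "closed ?C" using finite_netN by (intro closed_UN) auto
  ultimately have "y \<in> ?C" by (simp add: closed_limpt)
  then show ?thesis by blast
qed

lemma Fset_cover:
  assumes t: "0 < t" "t < 1" and y: "y \<in> K"
  shows "\<exists>es\<in>F t. y \<in> {fst (path_interval es)..snd (path_interval es)}"
proof -
  obtain n where n: "wmax ^ n < t" using real_arch_pow_inv[OF t(1) wmax_less_1] by blast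
  obtain x where x: "x \<in> netN r d K \<Phi> n" "y \<in> {fst (fst x)..snd (fst x)}"
    using K_subset_net_intervals[OF y] by blast
  obtain es where es: "rooted es" "length es = n" "path_interval es = fst x"
    using rooted_path_netN[OF x(1)] by blast
  have "path_weight es \<le> wmax ^ n"
    using path_weight_le_wmax_power[OF rooted_set_edges[OF es(1)]] es(2) by simp
  then have "path_weight es < t" using n by linarith
  define P where "P k \<longleftrightarrow> path_weight (take k es) \<le> t" for k
  define k where "k = (LEAST k. P k)"
  have "P n" unfolding P_def using es(2) \<open>path_weight es < t\<close> by simp
  then have k: "P k" "k \<le> n" unfolding k_def by (auto intro: LeastI Least_le)
  then have "k \<noteq> 0" using t(2) unfolding P_def by (cases k) auto
  then have "\<not> P (k - 1)" unfolding k_def by (intro not_less_Least) auto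
  moreover have "butlast (take k es) = take (k - 1) es" using k(2) es(2) by (simp add: butlast_take)
  moreover have "rooted (take k es)" using rooted_appendD[of "take k es" "drop k es"] es(1) by simp
  moreover have "take k es \<noteq> []" using \<open>k \<noteq> 0\<close> k(2) es(2) by auto
  ultimately have F: "take k es \<in> F t" using k(1) unfolding Fset_def P_def by auto
  have "set (drop k es) \<subseteq> E" by (rule subset_trans[OF set_drop_subset rooted_set_edges[OF es(1)]])
  from path_interval_append_subset[OF this path_interval_nondegenerate[OF \<open>rooted (take k es)\<close>]]
  have "fst (path_interval (take k es)) \<le> fst (path_interval es)"
    "snd (path_interval es) \<le> snd (path_interval (take k es))"
    by simp_all
  then have "y \<in> {fst (path_interval (take k es))..snd (path_interval (take k es))}"
    using x(2) es(3) by auto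
  with F show ?thesis by blast
qed

end

subsection \<open>Comparing ball sums with sums over \<open>F(t)\<close>\<close>

locale fnc_wifs = self_similar_measure I r d K p \<mu> + finite_type I r d K \<Phi>
  for I :: "'i set" and r d :: "'i \<Rightarrow> real" and K :: "real set" and p :: "'i \<Rightarrow> real"
    and \<mu> :: "real measure" and \<Phi> :: "'i itrule"
begin

definition rho :: "edge list \<Rightarrow> real" where
  "rho es = measure \<mu> {fst (path_interval es)..snd (path_interval es)}"

definition packing :: "real \<Rightarrow> real set \<Rightarrow> bool" where
  "packing t X \<longleftrightarrow> finite X \<and> X \<subseteq> K \<and> pairwise (\<lambda>x y. cball x t \<inter> cball y t = {}) X"

definition ball_sum :: "real \<Rightarrow> real \<Rightarrow> real set \<Rightarrow> real" where
  "ball_sum q t X = (\<Sum>x\<in>X. measure \<mu> (cball x t) powr q)"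

definition net_sum :: "real \<Rightarrow> real \<Rightarrow> real" where
  "net_sum q t = (\<Sum>es\<in>F t. rho es powr q)"

lemma rho_pos:
  assumes "rooted es"
  shows "0 < rho es"
proof -
  let ?s = "margin * path_weight es"
  have "0 < ?s" using margin_pos path_weight_pos[OF rooted_set_edges[OF assms]] by simp
  have "cball (margin_point es) ?s \<subseteq> {fst (path_interval es)..snd (path_interval es)}"
    using margin_point[OF assms] unfolding cball_eq_atLeastAtMost by auto
  then have "measure \<mu> (cball (margin_point es) ?s) \<le> rho es"
    unfolding rho_def by (rule measure_mono_borel) simp
  then show ?thesis using measure_cball_pos[OF margin_point(1)[OF assms] \<open>0 < ?s\<close>] by linarith
qed

lemma net_sum_pos:
  assumes "0 < t" "t < 1"
  shows "0 < net_sum q t"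
proof -
  obtain es where es: "es \<in> F t" using Fset_cover[OF assms zero_in_K] by blast
  have pos: "0 < rho e powr q" if "e \<in> F t" for e using rho_pos[OF FsetD(1)[OF that]] by simp
  have "0 < rho es powr q" using pos[OF es] .
  also have "\<dots> \<le> net_sum q t" unfolding net_sum_def using finite_Fset[OF assms(1)] es pos
    by (intro member_le_sum) (auto intro: less_imp_le)
  finally show ?thesis .
qed

lemma measure_cball_le_sum_rho:
  assumes t: "0 < t" "t < 1"
  shows "measure \<mu> (cball x s) \<le>
    (\<Sum>es\<in>{es\<in>F t. {fst (path_interval es)..snd (path_interval es)} \<inter> cball x s \<noteq> {}}. rho es)"
    (is "_ \<le> (\<Sum>es\<in>?N. rho es)")
proof -
  have finite_N: "finite ?N" using finite_Fset[OF t(1)] by simp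
  have K_borel: "K \<in> sets borel" using compact_imp_closed[OF compact_K] by (rule borel_closed)
  have "measure \<mu> (cball x s) \<le> measure \<mu> ((cball x s \<inter> K) \<union> (UNIV - K))"
    by (rule measure_mono_borel) (use K_borel in auto)
  also have "\<dots> \<le> measure \<mu> (cball x s \<inter> K) + measure \<mu> (UNIV - K)"
    using sets_\<mu> K_borel by (intro measure_Un_le) auto
  also have "\<dots> = measure \<mu> (cball x s \<inter> K)" using measure_compl_K by simp
  also have "\<dots> \<le> measure \<mu> (\<Union>es\<in>?N. {fst (path_interval es)..snd (path_interval es)})"
  proof (rule measure_mono_borel)
    show "cball x s \<inter> K \<subseteq> (\<Union>es\<in>?N. {fst (path_interval es)..snd (path_interval es)})"
      using Fset_cover[OF t] by fastforce
  qed (use finite_N in auto)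
  also have "\<dots> \<le> (\<Sum>es\<in>?N. rho es)"
    unfolding rho_def using finite_N sets_\<mu> by (intro measure_UNION_le) auto
  finally show ?thesis .
qed

lemma card_Fset_meeting_cball_le:
  assumes "0 < t"
  shows "real (card {es\<in>F t. {fst (path_interval es)..snd (path_interval es)} \<inter> cball x t \<noteq> {}}) \<le> 4 / wmin"
    (is "real (card ?N) \<le> _")
proof -
  have "real (card ?N) * (wmin * t) \<le> 4 * t"
  proof (rule card_mult_le_of_disjoint_family[where A = "\<lambda>es. {fst (path_interval es)<..<snd (path_interval es)}"
        and c = "x - 2 * t"])
    show "finite ?N" using finite_Fset[OF assms] by simp
    show "disjoint_family_on (\<lambda>es. {fst (path_interval es)<..<snd (path_interval es)}) ?N"
      unfolding disjoint_family_on_def using Fset_intervals_disjoint by blast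
    fix es assume es: "es \<in> ?N"
    then have d: "snd (path_interval es) - fst (path_interval es) \<le> t"
        "wmin * t < snd (path_interval es) - fst (path_interval es)"
        "fst (path_interval es) < snd (path_interval es)"
      using FsetD[of es t] by auto
    obtain y where "y \<in> {fst (path_interval es)..snd (path_interval es)}" "y \<in> cball x t"
      using es by blast
    then show "{fst (path_interval es)<..<snd (path_interval es)} \<subseteq> {x - 2 * t..x - 2 * t + 4 * t}"
      using d unfolding cball_eq_atLeastAtMost by auto
    show "wmin * t \<le> measure lborel {fst (path_interval es)<..<snd (path_interval es)}" using d by simp
  qed (use assms in auto)
  then show ?thesis using assms wmin_pos by (simp add: field_simps)
qed

lemma card_packing_meeting_interval_le:
  assumes "0 < t" "packing t X" "es \<in> F t"
  shows "real (card {x\<in>X. {fst (path_interval es)..snd (path_interval es)} \<inter> cball x t \<noteq> {}}) \<le> 5 / 2"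
    (is "real (card ?M) \<le> _")
proof -
  let ?a = "fst (path_interval es)"
  have d: "snd (path_interval es) - ?a \<le> t" using FsetD[OF assms(3)] by auto
  have "real (card ?M) * (2 * t) \<le> 5 * t"
  proof (rule card_mult_le_of_disjoint_family[where A = "\<lambda>x. cball x t" and c = "?a - 2 * t"])
    show "finite ?M" using assms(2) unfolding packing_def by simp
    show "disjoint_family_on (\<lambda>x. cball x t) ?M"
      using assms(2) unfolding disjoint_family_on_def packing_def pairwise_def by blast
    fix x assume "x \<in> ?M"
    then obtain y where "y \<in> {?a..snd (path_interval es)}" "y \<in> cball x t" by blast
    then show "cball x t \<subseteq> {?a - 2 * t..?a - 2 * t + 5 * t}"
      using d unfolding cball_eq_atLeastAtMost by auto
    show "2 * t \<le> measure lborel (cball x t)" using assms(1) unfolding cball_eq_atLeastAtMost by simp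
  qed (use assms(1) in auto)
  then show ?thesis using assms(1) by (simp add: field_simps)
qed

lemma measure_cball_powr_le:
  assumes t: "0 < t" "t < 1" and "0 \<le> q" "x \<in> K"
  shows "measure \<mu> (cball x t) powr q \<le>
    (4 / wmin) powr q * (\<Sum>es\<in>{es\<in>F t. {fst (path_interval es)..snd (path_interval es)} \<inter> cball x t \<noteq> {}}.
      rho es powr q)" (is "_ \<le> _ * (\<Sum>es\<in>?N. _)")
proof -
  have "finite ?N" using finite_Fset[OF t(1)] by simp
  obtain es0 where es0: "es0 \<in> F t" "x \<in> {fst (path_interval es0)..snd (path_interval es0)}"
    using Fset_cover[OF t assms(4)] by blast
  moreover have "x \<in> cball x t" using t(1) by simp
  ultimately have "es0 \<in> ?N" by blast
  then obtain es1 where es1: "es1 \<in> ?N" and es1_max: "\<forall>es\<in>?N. rho es \<le> rho es1"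
    using finite_ex_max_value[OF \<open>finite ?N\<close>, of rho] by blast
  have "es1 \<in> F t" using es1(1) by blast
  then have rho_es1: "0 < rho es1" by (rule rho_pos[OF FsetD(1)])
  have "measure \<mu> (cball x t) \<le> (\<Sum>es\<in>?N. rho es)" by (rule measure_cball_le_sum_rho[OF t])
  also have "\<dots> \<le> real (card ?N) * rho es1" using es1_max sum_bounded_above[of ?N rho "rho es1"] by simp
  also have "\<dots> \<le> 4 / wmin * rho es1"
    using card_Fset_meeting_cball_le[OF t(1)] rho_es1 by (intro mult_right_mono) auto
  finally have "measure \<mu> (cball x t) powr q \<le> (4 / wmin * rho es1) powr q"
    using assms(3) by (intro powr_mono2) auto
  also have "\<dots> = (4 / wmin) powr q * rho es1 powr q"
    using powr_mult[of "4 / wmin" "rho es1" q] wmin_pos rho_es1 by simp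
  also have "\<dots> \<le> (4 / wmin) powr q * (\<Sum>es\<in>?N. rho es powr q)"
    using \<open>finite ?N\<close> es1(1) by (intro mult_left_mono member_le_sum) auto
  finally show ?thesis .
qed

text \<open>For \<open>q \<ge> 0\<close>: each ball is dominated by the \<open>\<le> 4/w\<^sub>m\<^sub>i\<^sub>n\<close> intervals of \<open>F(t)\<close> it meets,
  and each interval meets at most two balls of a packing.\<close>

lemma ball_sum_le_net_sum_nonneg:
  assumes t: "0 < t" "t < 1" and "0 \<le> q" "packing t X"
  shows "ball_sum q t X \<le> (4 / wmin) powr q * (5 / 2) * net_sum q t"
proof -
  have fin: "finite X" "finite (F t)" using assms(4) finite_Fset[OF t(1)] unfolding packing_def by auto
  let ?meets = "\<lambda>es x. {fst (path_interval es)..snd (path_interval es)} \<inter> cball x t \<noteq> {}"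
  have swap: "(\<Sum>x\<in>X. \<Sum>es\<in>{es\<in>F t. ?meets es x}. rho es powr q) =
      (\<Sum>es\<in>F t. real (card {x\<in>X. ?meets es x}) * rho es powr q)"
    using sum.swap_restrict[OF fin, of "\<lambda>x es. rho es powr q" "\<lambda>x es. ?meets es x"] by simp
  have "ball_sum q t X \<le> (\<Sum>x\<in>X. (4 / wmin) powr q * (\<Sum>es\<in>{es\<in>F t. ?meets es x}. rho es powr q))"
    unfolding ball_sum_def using measure_cball_powr_le[OF t assms(3)] assms(4)
    by (intro sum_mono) (auto simp: packing_def)
  also have "\<dots> = (4 / wmin) powr q * (\<Sum>es\<in>F t. real (card {x\<in>X. ?meets es x}) * rho es powr q)"
    by (simp only: sum_distrib_left[symmetric] swap)
  also have "\<dots> \<le> (4 / wmin) powr q * (\<Sum>es\<in>F t. 5 / 2 * rho es powr q)"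
    using card_packing_meeting_interval_le[OF t(1) assms(4)]
    by (intro mult_left_mono sum_mono mult_right_mono) auto
  finally show ?thesis unfolding net_sum_def by (simp add: sum_distrib_left mult.assoc)
qed

text \<open>For \<open>q < 0\<close>: the centre of each ball of a packing lies in some interval of \<open>F(t)\<close>, which
  is contained in the ball; distinct centres give distinct intervals.\<close>

lemma ball_sum_le_net_sum_neg:
  assumes t: "0 < t" "t < 1" and "q < 0" "packing t X"
  shows "ball_sum q t X \<le> net_sum q t"
proof -
  have "\<exists>es. es \<in> F t \<and> x \<in> {fst (path_interval es)..snd (path_interval es)}" if "x \<in> X" for x
    using Fset_cover[OF t] that assms(4) unfolding packing_def by blast
  then have "\<forall>x\<in>X. \<exists>es. es \<in> F t \<and> x \<in> {fst (path_interval es)..snd (path_interval es)}" by simp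
  from bchoice[OF this] obtain g
    where "\<forall>x\<in>X. g x \<in> F t \<and> x \<in> {fst (path_interval (g x))..snd (path_interval (g x))}"
    by (rule exE)
  then have g: "\<And>x. x \<in> X \<Longrightarrow> g x \<in> F t"
      "\<And>x. x \<in> X \<Longrightarrow> x \<in> {fst (path_interval (g x))..snd (path_interval (g x))}"
    by simp_all
  have g_ball: "{fst (path_interval (g x))..snd (path_interval (g x))} \<subseteq> cball x t" if "x \<in> X" for x
    using g[OF that] FsetD(3,6)[OF g(1)[OF that]] unfolding cball_eq_atLeastAtMost by auto
  have "inj_on g X"
  proof (rule inj_onI, rule ccontr)
    fix x y assume xy: "x \<in> X" "y \<in> X" "g x = g y" "x \<noteq> y"
    then have "cball x t \<inter> cball y t = {}"
      using assms(4) unfolding packing_def pairwise_def by simp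
    then have "2 * t < \<bar>x - y\<bar>" by (rule dist_gt_of_cball_disjoint)
    moreover have "y \<in> cball x t" using g(2)[OF xy(2)] g_ball[OF xy(1)] xy(3) by auto
    ultimately show False using t(1) by (auto simp: dist_real_def)
  qed
  have "ball_sum q t X \<le> (\<Sum>x\<in>X. rho (g x) powr q)"
    unfolding ball_sum_def
  proof (rule sum_mono)
    fix x assume x: "x \<in> X"
    have "rho (g x) \<le> measure \<mu> (cball x t)"
      unfolding rho_def using g_ball[OF x] by (rule measure_mono_borel) simp
    then show "measure \<mu> (cball x t) powr q \<le> rho (g x) powr q"
      using assms(3) rho_pos[OF FsetD(1)[OF g(1)[OF x]]] by (intro powr_mono2') auto
  qed
  also have "\<dots> = (\<Sum>es\<in>g ` X. rho es powr q)" by (simp add: sum.reindex[OF \<open>inj_on g X\<close>])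
  also have "\<dots> \<le> net_sum q t"
    unfolding net_sum_def using g(1) finite_Fset[OF t(1)] by (intro sum_mono2) auto
  finally show ?thesis .
qed

text \<open>For \<open>q < 0\<close>, conversely, the balls of radius \<open>m w\<^sub>m\<^sub>i\<^sub>n t / 2\<close> around the margin points of
  the intervals of \<open>F(t)\<close> form a packing, each ball inside its interval.\<close>

lemma net_sum_le_ball_sum_neg:
  assumes t: "0 < t" "t < 1" and "q < 0"
  shows "\<exists>X. packing (margin * wmin / 2 * t) X \<and> net_sum q t \<le> ball_sum q (margin * wmin / 2 * t) X"
proof -
  let ?s = "margin * wmin / 2 * t"
  have "0 < ?s" using margin_pos wmin_pos t by simp
  have ball_in: "cball (margin_point es) ?s \<subseteq> {fst (path_interval es)<..<snd (path_interval es)}"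
    if es: "es \<in> F t" for es
  proof -
    have "margin * (wmin * t) < margin * path_weight es" using FsetD(5)[OF es] margin_pos by simp
    moreover have "0 < margin * (wmin * t)" using margin_pos wmin_pos t by simp
    ultimately have "?s < margin * path_weight es" by (simp add: field_simps)
    then show ?thesis using margin_point[OF FsetD(1)[OF es]] unfolding cball_eq_atLeastAtMost by auto
  qed
  have disjoint: "cball (margin_point e1) ?s \<inter> cball (margin_point e2) ?s = {}"
    if "e1 \<in> F t" "e2 \<in> F t" "e1 \<noteq> e2" for e1 e2
    using Fset_intervals_disjoint[OF that] ball_in[OF that(1)] ball_in[OF that(2)] by blast
  have inj: "inj_on margin_point (F t)"
  proof (rule inj_onI, rule ccontr)
    fix e1 e2 assume e: "e1 \<in> F t" "e2 \<in> F t" "margin_point e1 = margin_point e2" "e1 \<noteq> e2"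
    then have "margin_point e1 \<in> cball (margin_point e1) ?s \<inter> cball (margin_point e2) ?s"
      using \<open>0 < ?s\<close> by simp
    with disjoint[OF e(1,2,4)] show False by simp
  qed
  have "packing ?s (margin_point ` F t)"
    unfolding packing_def pairwise_image
    using finite_Fset[OF t(1)] margin_point(1)[OF FsetD(1)] disjoint by (auto simp: pairwise_def)
  moreover have "net_sum q t \<le> ball_sum q ?s (margin_point ` F t)"
    unfolding net_sum_def ball_sum_def sum.reindex[OF inj] comp_def
  proof (rule sum_mono)
    fix es assume es: "es \<in> F t"
    have "measure \<mu> (cball (margin_point es) ?s) \<le> rho es"
      unfolding rho_def using ball_in[OF es] by (intro measure_mono_borel) auto
    then show "rho es powr q \<le> measure \<mu> (cball (margin_point es) ?s) powr q"
      using assms(3) measure_cball_pos[OF margin_point(1)[OF FsetD(1)[OF es]] \<open>0 < ?s\<close>]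
      by (intro powr_mono2') auto
  qed
  ultimately show ?thesis by blast
qed

text \<open>For \<open>q \<ge> 0\<close>, conversely, sort the intervals of \<open>F(t)\<close> into the cells \<open>\<lfloor>x / 3t\<rfloor>\<close> of their
  margin points \<open>x\<close>: a cell holds at most \<open>5/w\<^sub>m\<^sub>i\<^sub>n\<close> intervals, and \<open>t\<close>-balls around margin points
  in cells of the same parity are disjoint.\<close>

definition grid_cell :: "real \<Rightarrow> int \<Rightarrow> edge list set" where
  "grid_cell t j = {es \<in> F t. \<lfloor>margin_point es / (3 * t)\<rfloor> = j}"

lemma grid_cell_bounds:
  assumes "0 < t" "es \<in> grid_cell t j"
  shows "3 * t * of_int j \<le> margin_point es" "margin_point es < 3 * t * (of_int j + 1)"
  using floor_divide_lower[of "3 * t" "margin_point es"] floor_divide_upper[of "3 * t" "margin_point es"] assms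
  unfolding grid_cell_def by (auto simp: mult.commute)

lemma card_grid_cell_le:
  assumes "0 < t"
  shows "real (card (grid_cell t j)) \<le> 5 / wmin"
proof -
  have "real (card (grid_cell t j)) * (wmin * t) \<le> 5 * t"
  proof (rule card_mult_le_of_disjoint_family[where A = "\<lambda>es. {fst (path_interval es)<..<snd (path_interval es)}"
        and c = "3 * t * of_int j - t"])
    show "finite (grid_cell t j)" using finite_Fset[OF assms] unfolding grid_cell_def by simp
    show "disjoint_family_on (\<lambda>es. {fst (path_interval es)<..<snd (path_interval es)}) (grid_cell t j)"
      unfolding disjoint_family_on_def grid_cell_def using Fset_intervals_disjoint by blast
    fix es assume es: "es \<in> grid_cell t j"
    then have F: "es \<in> F t" unfolding grid_cell_def by simp
    have "fst (path_interval es) < margin_point es" "margin_point es < snd (path_interval es)"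
      using margin_point_interior[OF FsetD(1)[OF F]] by auto
    moreover note FsetD(3,5,6,7)[OF F] grid_cell_bounds[OF assms es]
    ultimately show "{fst (path_interval es)<..<snd (path_interval es)} \<subseteq>
        {3 * t * of_int j - t..3 * t * of_int j - t + 5 * t}"
      "wmin * t \<le> measure lborel {fst (path_interval es)<..<snd (path_interval es)}"
      by (auto simp: algebra_simps)
  qed (use assms in auto)
  then show ?thesis using assms wmin_pos by (simp add: field_simps)
qed

lemma grid_cell_sum_le:
  assumes "0 < t" "0 \<le> q" "es \<in> grid_cell t j" "\<forall>e\<in>grid_cell t j. rho e \<le> rho es"
  shows "(\<Sum>e\<in>grid_cell t j. rho e powr q) \<le> 5 / wmin * measure \<mu> (cball (margin_point es) t) powr q"
proof -
  have F: "es \<in> F t" using assms(3) unfolding grid_cell_def by simp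
  have "(\<Sum>e\<in>grid_cell t j. rho e powr q) \<le> (\<Sum>e\<in>grid_cell t j. rho es powr q)"
  proof (rule sum_mono)
    fix e assume e: "e \<in> grid_cell t j"
    then have "e \<in> F t" unfolding grid_cell_def by simp
    then have "0 < rho e" by (rule rho_pos[OF FsetD(1)])
    then show "rho e powr q \<le> rho es powr q" using assms(2,4) e by (intro powr_mono2) auto
  qed
  also have "\<dots> = real (card (grid_cell t j)) * rho es powr q" by simp
  also have "\<dots> \<le> 5 / wmin * rho es powr q"
    using card_grid_cell_le[OF assms(1)] by (intro mult_right_mono) auto
  also have "\<dots> \<le> 5 / wmin * measure \<mu> (cball (margin_point es) t) powr q"
  proof -
    have "{fst (path_interval es)..snd (path_interval es)} \<subseteq> cball (margin_point es) t"
      using margin_point_interior[OF FsetD(1)[OF F]] FsetD(3,6)[OF F]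
      unfolding cball_eq_atLeastAtMost by auto
    then have "rho es \<le> measure \<mu> (cball (margin_point es) t)"
      unfolding rho_def by (rule measure_mono_borel) simp
    then show ?thesis
      using assms(2) rho_pos[OF FsetD(1)[OF F]] wmin_pos by (intro mult_left_mono powr_mono2) auto
  qed
  finally show ?thesis .
qed

lemma grid_packing:
  assumes "0 < t" "finite J" "\<And>j. j \<in> J \<Longrightarrow> rep j \<in> grid_cell t j"
    and "\<And>j j'. j \<in> J \<Longrightarrow> j' \<in> J \<Longrightarrow> j \<noteq> j' \<Longrightarrow> 2 \<le> \<bar>j - j'\<bar>"
  shows "packing t ((\<lambda>j. margin_point (rep j)) ` J)" "inj_on (\<lambda>j. margin_point (rep j)) J"
proof -
  have far: "2 * t < \<bar>margin_point (rep j) - margin_point (rep j')\<bar>"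
    if j: "j \<in> J" "j' \<in> J" "j \<noteq> j'" for j j'
  proof -
    have "j + 2 \<le> j' \<or> j' + 2 \<le> j" using assms(4)[OF j] by linarith
    then have "real_of_int j + 2 \<le> of_int j' \<or> real_of_int j' + 2 \<le> of_int j"
      by (metis of_int_add of_int_le_iff of_int_numeral)
    then have "3 * t * (of_int j + 2) \<le> 3 * t * of_int j' \<or> 3 * t * (of_int j' + 2) \<le> 3 * t * of_int j"
      using assms(1) by auto
    then show ?thesis
      using grid_cell_bounds[OF assms(1) assms(3)[OF j(1)]] grid_cell_bounds[OF assms(1) assms(3)[OF j(2)]]
        assms(1) by (auto simp: algebra_simps)
  qed
  show "inj_on (\<lambda>j. margin_point (rep j)) J"
    using far assms(1) by (intro inj_onI) force
  have "margin_point (rep j) \<in> K" if "j \<in> J" for j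
  proof -
    have "rep j \<in> F t" using assms(3)[OF that] unfolding grid_cell_def by simp
    then show ?thesis by (rule margin_point(1)[OF FsetD(1)])
  qed
  moreover have "cball (margin_point (rep j)) t \<inter> cball (margin_point (rep j')) t = {}"
    if "j \<in> J" "j' \<in> J" "j \<noteq> j'" for j j'
    using far[OF that] by (auto simp: dist_real_def)
  ultimately show "packing t ((\<lambda>j. margin_point (rep j)) ` J)"
    unfolding packing_def pairwise_image using assms(2) by (auto simp: pairwise_def)
qed

definition grid_rep :: "real \<Rightarrow> int \<Rightarrow> edge list" where
  "grid_rep t j = (SOME es. es \<in> grid_cell t j \<and> (\<forall>e\<in>grid_cell t j. rho e \<le> rho es))"

lemma grid_rep:
  assumes "0 < t" "grid_cell t j \<noteq> {}"
  shows "grid_rep t j \<in> grid_cell t j" "\<forall>e\<in>grid_cell t j. rho e \<le> rho (grid_rep t j)"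
proof -
  have "finite (grid_cell t j)" using finite_Fset[OF assms(1)] unfolding grid_cell_def by simp
  then have "\<exists>es. es \<in> grid_cell t j \<and> (\<forall>e\<in>grid_cell t j. rho e \<le> rho es)"
    using finite_ex_max_value[OF _ assms(2), of rho] by blast
  from someI_ex[OF this] show "grid_rep t j \<in> grid_cell t j" "\<forall>e\<in>grid_cell t j. rho e \<le> rho (grid_rep t j)"
    unfolding grid_rep_def by blast+
qed

lemma net_sum_le_ball_sum_nonneg:
  assumes t: "0 < t" "t < 1" and "0 \<le> q"
  shows "\<exists>X1 X2. packing t X1 \<and> packing t X2 \<and> net_sum q t \<le> 5 / wmin * (ball_sum q t X1 + ball_sum q t X2)"
proof -
  define label where "label es = \<lfloor>margin_point es / (3 * t)\<rfloor>" for es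
  let ?J = "label ` F t"
  let ?rep = "grid_rep t"
  have "finite ?J" using finite_Fset[OF t(1)] by simp
  have "grid_cell t j \<noteq> {}" if "j \<in> ?J" for j using that unfolding grid_cell_def label_def by auto
  note rep = grid_rep[OF t(1) this]
  let ?B = "\<lambda>j. measure \<mu> (cball (margin_point (?rep j)) t) powr q"
  have "net_sum q t = (\<Sum>j\<in>?J. \<Sum>es\<in>grid_cell t j. rho es powr q)"
    unfolding net_sum_def grid_cell_def label_def[symmetric]
    using sum.group[OF finite_Fset[OF t(1)] \<open>finite ?J\<close>, of label "\<lambda>es. rho es powr q"] by simp
  also have "\<dots> \<le> (\<Sum>j\<in>?J. 5 / wmin * ?B j)"
    using grid_cell_sum_le[OF t(1) assms(3) rep] by (intro sum_mono) auto
  also have "\<dots> = 5 / wmin * ((\<Sum>j\<in>{j\<in>?J. even j}. ?B j) + (\<Sum>j\<in>{j\<in>?J. odd j}. ?B j))"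
  proof -
    have "?J = {j\<in>?J. even j} \<union> {j\<in>?J. odd j}" "{j\<in>?J. even j} \<inter> {j\<in>?J. odd j} = {}" by auto
    then have split: "(\<Sum>j\<in>?J. ?B j) = (\<Sum>j\<in>{j\<in>?J. even j}. ?B j) + (\<Sum>j\<in>{j\<in>?J. odd j}. ?B j)"
      using \<open>finite ?J\<close> sum.union_disjoint[of "{j\<in>?J. even j}" "{j\<in>?J. odd j}" ?B] by auto
    show ?thesis unfolding sum_distrib_left[symmetric] split ..
  qed
  finally have bound: "net_sum q t \<le> 5 / wmin * ((\<Sum>j\<in>{j\<in>?J. even j}. ?B j) + (\<Sum>j\<in>{j\<in>?J. odd j}. ?B j))" .
  have packing: "packing t ((\<lambda>j. margin_point (?rep j)) ` {j\<in>?J. P j})"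
    and sum: "(\<Sum>j\<in>{j\<in>?J. P j}. ?B j) = ball_sum q t ((\<lambda>j. margin_point (?rep j)) ` {j\<in>?J. P j})"
    if "P = even \<or> P = odd" for P
  proof -
    have "2 \<le> \<bar>j - j'\<bar>" if "j \<in> {j\<in>?J. P j}" "j' \<in> {j\<in>?J. P j}" "j \<noteq> j'" for j j'
    proof -
      have "even (j - j')" using that(1,2) \<open>P = even \<or> P = odd\<close> by auto
      then show ?thesis using abs_diff_ge_2_if_even that(3) by blast
    qed
    then show "packing t ((\<lambda>j. margin_point (?rep j)) ` {j\<in>?J. P j})"
      and "(\<Sum>j\<in>{j\<in>?J. P j}. ?B j) = ball_sum q t ((\<lambda>j. margin_point (?rep j)) ` {j\<in>?J. P j})"
      using grid_packing[OF t(1), of "{j\<in>?J. P j}" ?rep] \<open>finite ?J\<close> rep(1)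
      unfolding ball_sum_def by (auto simp: sum.reindex)
  qed
  let ?X = "\<lambda>P. (\<lambda>j. margin_point (?rep j)) ` {j\<in>?J. P j}"
  show ?thesis
  proof (intro exI conjI)
    show "packing t (?X even)" "packing t (?X odd)" by (rule packing; simp)+
    show "net_sum q t \<le> 5 / wmin * (ball_sum q t (?X even) + ball_sum q t (?X odd))"
      using bound sum[of even] sum[of odd] by simp
  qed
qed

definition ball_sums :: "real \<Rightarrow> real \<Rightarrow> real set" where
  "ball_sums q t = {ball_sum q t X | X. packing t X}"

lemma Lq_spectrum_eq: "Lq_spectrum \<mu> K q = Liminf (at_right 0) (\<lambda>t. ereal (ln (Sup (ball_sums q t)) / ln t))"
  unfolding Lq_spectrum_def ball_sums_def ball_sum_def packing_def ..

definition C_upper :: "real \<Rightarrow> real" where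
  "C_upper q = (if 0 \<le> q then (4 / wmin) powr q * (5 / 2) else 1)"

lemma Sup_ball_sums:
  assumes "0 < t" "t < 1"
  shows "0 < Sup (ball_sums q t)" "Sup (ball_sums q t) \<le> C_upper q * net_sum q t"
    and ball_sum_le_Sup: "packing t X \<Longrightarrow> ball_sum q t X \<le> Sup (ball_sums q t)"
proof -
  have upper: "s \<le> C_upper q * net_sum q t" if "s \<in> ball_sums q t" for s
    using that ball_sum_le_net_sum_nonneg[OF assms] ball_sum_le_net_sum_neg[OF assms]
    unfolding ball_sums_def C_upper_def by (cases "0 \<le> q") auto
  have "packing t {0}" using zero_in_K unfolding packing_def by simp
  then have zero: "ball_sum q t {0} \<in> ball_sums q t" unfolding ball_sums_def by blast
  have bdd: "bdd_above (ball_sums q t)" using upper by (auto simp: bdd_above_def)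
  show "ball_sum q t X \<le> Sup (ball_sums q t)" if "packing t X"
    using that bdd unfolding ball_sums_def by (intro cSup_upper) auto
  have "0 < ball_sum q t {0}"
    using measure_cball_pos[OF zero_in_K assms(1)] unfolding ball_sum_def by simp
  then show "0 < Sup (ball_sums q t)" using cSup_upper[OF zero bdd] by linarith
  show "Sup (ball_sums q t) \<le> C_upper q * net_sum q t"
    using zero upper by (intro cSup_least) auto
qed

definition scale :: "real \<Rightarrow> real" where
  "scale q = (if 0 \<le> q then 1 else margin * wmin / 2)"

definition C_lower :: "real \<Rightarrow> real" where
  "C_lower q = (if 0 \<le> q then 10 / wmin else 1)"

lemma scale_bounds: "0 < scale q" "scale q \<le> 1"
proof -
  have "margin * wmin \<le> 1 / 2 * 1"
    using margin_le_half wmin_le_1 margin_pos wmin_pos by (intro mult_mono) auto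
  then show "0 < scale q" "scale q \<le> 1"
    unfolding scale_def using margin_pos wmin_pos by auto
qed

lemma net_sum_le_Sup:
  assumes t: "0 < t" "t < 1"
  shows "net_sum q t \<le> C_lower q * Sup (ball_sums q (scale q * t))"
proof (cases "0 \<le> q")
  case True
  then obtain X1 X2 where X: "packing t X1" "packing t X2"
      "net_sum q t \<le> 5 / wmin * (ball_sum q t X1 + ball_sum q t X2)"
    using net_sum_le_ball_sum_nonneg[OF t] by blast
  have "ball_sum q t X1 + ball_sum q t X2 \<le> 2 * Sup (ball_sums q t)"
    using ball_sum_le_Sup[OF t X(1), where q = q] ball_sum_le_Sup[OF t X(2), where q = q] by simp
  then have "5 / wmin * (ball_sum q t X1 + ball_sum q t X2) \<le> 5 / wmin * (2 * Sup (ball_sums q t))"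
    using wmin_pos by (intro mult_left_mono) auto
  with X(3) True show ?thesis unfolding C_lower_def scale_def by simp
next
  case False
  let ?s = "margin * wmin / 2 * t"
  have "?s \<le> 1 * t"
    using scale_bounds[of q] t(1) False unfolding scale_def by (intro mult_right_mono) auto
  then have s: "0 < ?s" "?s < 1" using margin_pos wmin_pos t by (simp, linarith)
  obtain X where X: "packing ?s X" "net_sum q t \<le> ball_sum q ?s X"
    using net_sum_le_ball_sum_neg[OF t, of q] False by auto
  then have "net_sum q t \<le> Sup (ball_sums q ?s)"
    using ball_sum_le_Sup[OF s X(1), where q = q] by linarith
  with False show ?thesis unfolding C_lower_def scale_def by simp
qed

lemma Liminf_net_sum_le_Liminf_ball_sums:
  "Liminf (at_right 0) (\<lambda>t. ereal (ln (net_sum q t) / ln t)) \<le>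
   Liminf (at_right 0) (\<lambda>t. ereal (ln (Sup (ball_sums q t)) / ln t))"
proof -
  have C_upper_pos: "0 < C_upper q" unfolding C_upper_def using wmin_pos by auto
  show ?thesis
  proof (rule Liminf_at_right_0_le_rescaled[where c = 1 and h = "\<lambda>_. 1" and e = "\<lambda>t. ln (C_upper q) / ln t"])
    show "eventually (\<lambda>t. ln (net_sum q (1 * t)) / ln (1 * t) * 1 + ln (C_upper q) / ln t
        \<le> ln (Sup (ball_sums q t)) / ln t) (at_right 0)"
      unfolding eventually_at_right_field
    proof (intro exI[of _ 1] conjI allI impI)
      fix t :: real assume t: "0 < t" "t < 1"
      have "ln (Sup (ball_sums q t)) \<le> ln (C_upper q * net_sum q t)"
        using Sup_ball_sums[OF t, where q = q] by simp
      also have "\<dots> = ln (C_upper q) + ln (net_sum q t)"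
        using C_upper_pos net_sum_pos[OF t, where q = q] by (simp add: ln_mult)
      finally show "ln (net_sum q (1 * t)) / ln (1 * t) * 1 + ln (C_upper q) / ln t
          \<le> ln (Sup (ball_sums q t)) / ln t"
        using t by (simp add: add_divide_distrib[symmetric] divide_right_mono_neg)
    qed simp
  qed (auto intro: tendsto_const_divide_ln_at_right_0)
qed

lemma Liminf_ball_sums_le_Liminf_net_sum:
  "Liminf (at_right 0) (\<lambda>t. ereal (ln (Sup (ball_sums q t)) / ln t)) \<le>
   Liminf (at_right 0) (\<lambda>t. ereal (ln (net_sum q t) / ln t))"
proof -
  have C_lower_pos: "0 < C_lower q" unfolding C_lower_def using wmin_pos by auto
  let ?c = "scale q"
  show ?thesis
  proof (rule Liminf_at_right_0_le_rescaled[where c = ?c and h = "\<lambda>t. ln ?c / ln t + 1"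
        and e = "\<lambda>t. ln (C_lower q) / ln t"])
    show "((\<lambda>t. ln ?c / ln t + 1) \<longlongrightarrow> 1) (at_right 0)"
      using tendsto_add[OF tendsto_const_divide_ln_at_right_0[of "ln ?c"] tendsto_const[of 1]] by simp
    show "eventually (\<lambda>t. ln (Sup (ball_sums q (?c * t))) / ln (?c * t) * (ln ?c / ln t + 1)
        + ln (C_lower q) / ln t \<le> ln (net_sum q t) / ln t) (at_right 0)"
      unfolding eventually_at_right_field
    proof (intro exI[of _ 1] conjI allI impI)
      fix t :: real assume t: "0 < t" "t < 1"
      have "?c * t \<le> 1 * t" using scale_bounds[of q] t(1) by (intro mult_right_mono) auto
      then have ct: "0 < ?c * t" "?c * t < 1" using scale_bounds[of q] t by (simp, linarith)
      have "ln (net_sum q t) \<le> ln (C_lower q * Sup (ball_sums q (?c * t)))"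
        using net_sum_le_Sup[OF t, where q = q] net_sum_pos[OF t, where q = q] by simp
      also have "\<dots> = ln (C_lower q) + ln (Sup (ball_sums q (?c * t)))"
        using C_lower_pos Sup_ball_sums(1)[OF ct, where q = q] by (simp add: ln_mult)
      finally have "(ln (C_lower q) + ln (Sup (ball_sums q (?c * t)))) / ln t \<le> ln (net_sum q t) / ln t"
        using t by (intro divide_right_mono_neg) auto
      moreover have "ln ?c / ln t + 1 = ln (?c * t) / ln t"
        using scale_bounds[of q] t by (simp add: ln_mult field_simps)
      ultimately show "ln (Sup (ball_sums q (?c * t))) / ln (?c * t) * (ln ?c / ln t + 1)
          + ln (C_lower q) / ln t \<le> ln (net_sum q t) / ln t"
        using ct t by (simp add: add_divide_distrib)
    qed simp
  qed (use scale_bounds in \<open>auto intro: tendsto_const_divide_ln_at_right_0\<close>)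
qed

end

theorem proposition5p2:
  fixes I :: "'i set" and r d p :: "'i \<Rightarrow> real" and K :: "real set"
    and \<mu> :: "real measure" and \<Phi> :: "'i itrule" and q :: real
  assumes "finite I"
    and "\<forall>i\<in>I. 0 < \<bar>r i\<bar> \<and> \<bar>r i\<bar> < 1"
    and "\<forall>i\<in>I. p i > 0" and "(\<Sum>i\<in>I. p i) = 1"
    and "compact K" and "K \<noteq> {}" and "K = (\<Union>i\<in>I. (\<lambda>x. r i * x + d i) ` K)"
    and "\<not> (\<exists>x. K = {x})" and "convex hull K = {0..1}"
    and "sets \<mu> = sets borel" and "prob_space \<mu>"
    and "\<forall>E\<in>sets borel. measure \<mu> E = (\<Sum>i\<in>I. p i * measure \<mu> ((\<lambda>x. r i * x + d i) -` E))"
    and "is_iteration_rule I r d K \<Phi>"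
    and "FNC r d K \<Phi>"
  shows "Lq_spectrum \<mu> K q =
         Liminf (at_right 0) (\<lambda>t. ereal (
           ln (\<Sum>\<eta>\<in>Fset r d K \<Phi> t. measure \<mu> {fst (path_interval \<eta>)..snd (path_interval \<eta>)} powr q)
           / ln t))"
proof -
  \<comment> \<open>the hypothesis that \<open>K\<close> is not a singleton is implied by \<open>convex hull K = {0..1}\<close>\<close>
  interpret fnc_wifs I r d K p \<mu> \<Phi>
    by (intro fnc_wifs.intro self_similar_measure.intro finite_type.intro net_intervals.intro
        self_similar_set.intro self_similar_measure_axioms.intro net_intervals_axioms.intro
        finite_type_axioms.intro) (rule assms)+
  show ?thesis
    using antisym[OF Liminf_ball_sums_le_Liminf_net_sum Liminf_net_sum_le_Liminf_ball_sums, of q]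
    unfolding Lq_spectrum_eq net_sum_def rho_def .
qed

end
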